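(* The sequence $1\to\mathrm{Iso}(\mathbb U^\prec)\xrightarrow{i^\prec}\mathrm{Aut}(\mathbb U^\prec)\xrightarrow{\pi^\prec}\mathrm{Aut}(\mathbb Q_{\ge0})\to1$ is a short exact sequence of topological groups, where $i^\prec$ is the inclusion and $\pi^\prec(f)=D_f$. Moreover, $\pi^\prec$ admits a continuous homomorphic section and induces an isomorphism of topological groups $\mathrm{Aut}(\mathbb U^\prec)\cong\mathrm{Iso}(\mathbb U^\prec)\rtimes\mathrm{Aut}(\mathbb Q_{\ge0})$.
   Context: A two-sorted ultrametric space is $(X,d,D)$ with $D$ a linear order with least element $0$ and $d$ an ultrametric with values in $D$. A convex order is a linear order of the points in which every ball is convex. $\mathbb U^\prec$ is the Fraïssé limit of the class of finite convexly ordered two-sorted ultrametric spaces with order-preserving dc-embeddings (dc-embedding: injection $f$ with order embedding $D_f$ of distance sets fixing $0$ and $d(f(x),f(x'))=D_f(d(x,x'))$); its distance set is $\mathbb Q_{\ge0}$. $\mathrm{Aut}(\mathbb U^\prec)$ is its group of order-preserving dc-automorphisms with the topology of pointwise convergence on both sorts, $\mathrm{Iso}(\mathbb U^\prec)$ the closed subgroup of those with $D_f=\mathrm{id}$. A short exact sequence of topological groups $1\to G_1\xrightarrow{i}H\xrightarrow{\pi}G_2\to1$ means $i$ is a continuous embedding, $\pi$ a continuous open surjective homomorphism, and $i[G_1]=\ker\pi$. The semidirect product $N\rtimes H$ is $N\times H$ with product topology and multiplication $(n,h)(n',h')=(n\,s(h)n's(h)^{-1},hh')$, the isomorphism being $(n,h)\mapsto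 n\,s(h)$ for the section $s$. *)

theory Defs
  imports "HOL-Analysis.Analysis" "HOL-Algebra.Coset"
begin

text \<open>Distance sets are represented as subsets of the nonnegative rationals with the
inherited order (every finite linear order with least element 0 is isomorphic to such a set);
the distance set of the limit is all of Qnn.\<close>

definition Qnn :: "rat set" where "Qnn = {q. 0 \<le> q}"

definition ultrametric_on :: "'p set \<Rightarrow> rat set \<Rightarrow> ('p \<Rightarrow> 'p \<Rightarrow> rat) \<Rightarrow> bool" where
  "ultrametric_on Y E d \<longleftrightarrow>
     (\<forall>x\<in>Y. \<forall>y\<in>Y. d x y \<in> E) \<and>
     (\<forall>x\<in>Y. \<forall>y\<in>Y. d x y = 0 \<longleftrightarrow> x = y) \<and>
     (\<forall>x\<in>Y. \<forall>y\<in>Y. d x y = d y x) \<and>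
     (\<forall>x\<in>Y. \<forall>y\<in>Y. \<forall>z\<in>Y. d x z \<le> max (d x y) (d y z))"

definition strict_linear_on :: "'p set \<Rightarrow> ('p \<Rightarrow> 'p \<Rightarrow> bool) \<Rightarrow> bool" where
  "strict_linear_on Y lt \<longleftrightarrow>
     (\<forall>x\<in>Y. \<not> lt x x) \<and>
     (\<forall>x\<in>Y. \<forall>y\<in>Y. \<forall>z\<in>Y. lt x y \<and> lt y z \<longrightarrow> lt x z) \<and>
     (\<forall>x\<in>Y. \<forall>y\<in>Y. x \<noteq> y \<longrightarrow> lt x y \<or> lt y x)"

definition convex_in :: "'p set \<Rightarrow> ('p \<Rightarrow> 'p \<Rightarrow> bool) \<Rightarrow> 'p set \<Rightarrow> bool" where
  "convex_in Y lt B \<longleftrightarrow> (\<forall>x\<in>B. \<forall>z\<in>B. \<forall>y\<in>Y. lt x y \<and> lt y z \<longrightarrow> y \<in> B)"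

definition convex_order :: "'p set \<Rightarrow> ('p \<Rightarrow> 'p \<Rightarrow> rat) \<Rightarrow> ('p \<Rightarrow> 'p \<Rightarrow> bool) \<Rightarrow> bool" where
  "convex_order Y d lt \<longleftrightarrow> strict_linear_on Y lt \<and>
     (\<forall>x\<in>Y. \<forall>r. convex_in Y lt {y\<in>Y. d x y \<le> r} \<and> convex_in Y lt {y\<in>Y. d x y < r})"

definition cous :: "'p set \<Rightarrow> ('p \<Rightarrow> 'p \<Rightarrow> rat) \<Rightarrow> rat set \<Rightarrow> ('p \<Rightarrow> 'p \<Rightarrow> bool) \<Rightarrow> bool" where
  "cous Y d E lt \<longleftrightarrow> E \<subseteq> Qnn \<and> 0 \<in> E \<and> ultrametric_on Y E d \<and> convex_order Y d lt"

definition dc_emb ::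
  "'p set \<Rightarrow> ('p \<Rightarrow> 'p \<Rightarrow> rat) \<Rightarrow> rat set \<Rightarrow> ('p \<Rightarrow> 'p \<Rightarrow> bool) \<Rightarrow>
   'q set \<Rightarrow> ('q \<Rightarrow> 'q \<Rightarrow> rat) \<Rightarrow> rat set \<Rightarrow> ('q \<Rightarrow> 'q \<Rightarrow> bool) \<Rightarrow>
   ('p \<Rightarrow> 'q) \<Rightarrow> (rat \<Rightarrow> rat) \<Rightarrow> bool" where
  "dc_emb Y d E lt Y' d' E' lt' f Df \<longleftrightarrow>
     inj_on f Y \<and> f ` Y \<subseteq> Y' \<and> Df ` E \<subseteq> E' \<and> strict_mono_on E Df \<and> Df 0 = 0 \<and>
     (\<forall>x\<in>Y. \<forall>y\<in>Y. d' (f x) (f y) = Df (d x y)) \<and>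
     (\<forall>x\<in>Y. \<forall>y\<in>Y. lt x y \<longrightarrow> lt' (f x) (f y))"

text \<open>Fraisse limit of the class of finite convexly ordered two-sorted ultrametric spaces:
countable, itself convexly ordered with distance set Qnn, and with the extension property
(finite structures are coded on nat).\<close>
definition extension_property :: "'a set \<Rightarrow> ('a \<Rightarrow> 'a \<Rightarrow> rat) \<Rightarrow> ('a \<Rightarrow> 'a \<Rightarrow> bool) \<Rightarrow> bool" where
  "extension_property X d lt \<longleftrightarrow>
    (\<forall>(Y::nat set) dY E ltY Y' E' f Df.
       finite Y \<and> finite E \<and> cous Y dY E ltY \<and>
       Y' \<subseteq> Y \<and> E' \<subseteq> E \<and> 0 \<in> E' \<and> (\<forall>x\<in>Y'. \<forall>y\<in>Y'. dY x y \<in> E') \<and>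
       dc_emb Y' dY E' ltY X d Qnn lt f Df \<longrightarrow>
       (\<exists>g Dg. dc_emb Y dY E ltY X d Qnn lt g Dg \<and>
              (\<forall>y\<in>Y'. g y = f y) \<and> (\<forall>e\<in>E'. Dg e = Df e)))"

definition fraisse_limit_U :: "'a set \<Rightarrow> ('a \<Rightarrow> 'a \<Rightarrow> rat) \<Rightarrow> ('a \<Rightarrow> 'a \<Rightarrow> bool) \<Rightarrow> bool" where
  "fraisse_limit_U X d lt \<longleftrightarrow> countable X \<and> cous X d Qnn lt \<and> extension_property X d lt"

definition AutU_carrier :: "'a set \<Rightarrow> ('a \<Rightarrow> 'a \<Rightarrow> rat) \<Rightarrow> ('a \<Rightarrow> 'a \<Rightarrow> bool) \<Rightarrow> (('a \<Rightarrow> 'a) \<times> (rat \<Rightarrow> rat)) set" where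
  "AutU_carrier X d lt = {(f, g). f \<in> extensional X \<and> g \<in> extensional Qnn \<and>
     bij_betw f X X \<and> bij_betw g Qnn Qnn \<and> strict_mono_on Qnn g \<and> g 0 = 0 \<and>
     (\<forall>x\<in>X. \<forall>y\<in>X. d (f x) (f y) = g (d x y)) \<and>
     (\<forall>x\<in>X. \<forall>y\<in>X. lt x y \<longrightarrow> lt (f x) (f y))}"

definition AutU :: "'a set \<Rightarrow> ('a \<Rightarrow> 'a \<Rightarrow> rat) \<Rightarrow> ('a \<Rightarrow> 'a \<Rightarrow> bool) \<Rightarrow> (('a \<Rightarrow> 'a) \<times> (rat \<Rightarrow> rat)) monoid" where
  "AutU X d lt = \<lparr>carrier = AutU_carrier X d lt,
     mult = (\<lambda>p q. (compose X (fst p) (fst q), compose Qnn (snd p) (snd q))),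
     one = (restrict id X, restrict id Qnn)\<rparr>"

definition AutU_top :: "'a set \<Rightarrow> ('a \<Rightarrow> 'a \<Rightarrow> rat) \<Rightarrow> ('a \<Rightarrow> 'a \<Rightarrow> bool) \<Rightarrow> (('a \<Rightarrow> 'a) \<times> (rat \<Rightarrow> rat)) topology" where
  "AutU_top X d lt = subtopology
     (prod_topology (product_topology (\<lambda>_. discrete_topology X) X)
                    (product_topology (\<lambda>_. discrete_topology Qnn) Qnn))
     (AutU_carrier X d lt)"

definition IsoU :: "'a set \<Rightarrow> ('a \<Rightarrow> 'a \<Rightarrow> rat) \<Rightarrow> ('a \<Rightarrow> 'a \<Rightarrow> bool) \<Rightarrow> (('a \<Rightarrow> 'a) \<times> (rat \<Rightarrow> rat)) monoid" where
  "IsoU X d lt = (AutU X d lt)\<lparr>carrier := {p \<in> AutU_carrier X d lt. snd p = restrict id Qnn}\<rparr>"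

definition IsoU_top :: "'a set \<Rightarrow> ('a \<Rightarrow> 'a \<Rightarrow> rat) \<Rightarrow> ('a \<Rightarrow> 'a \<Rightarrow> bool) \<Rightarrow> (('a \<Rightarrow> 'a) \<times> (rat \<Rightarrow> rat)) topology" where
  "IsoU_top X d lt = subtopology (AutU_top X d lt) (carrier (IsoU X d lt))"

definition AutQ :: "(rat \<Rightarrow> rat) monoid" where
  "AutQ = \<lparr>carrier = {g \<in> extensional Qnn. bij_betw g Qnn Qnn \<and> strict_mono_on Qnn g},
     mult = compose Qnn, one = restrict id Qnn\<rparr>"

definition AutQ_top :: "(rat \<Rightarrow> rat) topology" where
  "AutQ_top = subtopology (product_topology (\<lambda>_. discrete_topology Qnn) Qnn) (carrier AutQ)"

definition topological_group :: "('g, 'm) monoid_scheme \<Rightarrow> 'g topology \<Rightarrow> bool" where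
  "topological_group G T \<longleftrightarrow> group G \<and> topspace T = carrier G \<and>
     continuous_map (prod_topology T T) T (\<lambda>(x, y). x \<otimes>\<^bsub>G\<^esub> y) \<and>
     continuous_map T T (\<lambda>x. inv\<^bsub>G\<^esub> x)"

definition short_exact_top ::
  "('a, 'm) monoid_scheme \<Rightarrow> 'a topology \<Rightarrow> ('b, 'n) monoid_scheme \<Rightarrow> 'b topology \<Rightarrow>
   ('c, 'o) monoid_scheme \<Rightarrow> 'c topology \<Rightarrow> ('a \<Rightarrow> 'b) \<Rightarrow> ('b \<Rightarrow> 'c) \<Rightarrow> bool" where
  "short_exact_top G1 T1 H TH G2 T2 i p \<longleftrightarrow>
     topological_group G1 T1 \<and> topological_group H TH \<and> topological_group G2 T2 \<and>
     i \<in> hom G1 H \<and> inj_on i (carrier G1) \<and> continuous_map T1 TH i \<and> embedding_map T1 TH i \<and>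
     p \<in> hom H G2 \<and> p ` carrier H = carrier G2 \<and> continuous_map TH T2 p \<and> open_map TH T2 p \<and>
     i ` carrier G1 = kernel H G2 p"

definition semidirect ::
  "('g, 'm) monoid_scheme \<Rightarrow> ('h, 'n) monoid_scheme \<Rightarrow> ('g, 'o) monoid_scheme \<Rightarrow> ('h \<Rightarrow> 'g) \<Rightarrow> ('g \<times> 'h) monoid" where
  "semidirect N H G s = \<lparr>carrier = carrier N \<times> carrier H,
     mult = (\<lambda>a b. (fst a \<otimes>\<^bsub>G\<^esub> s (snd a) \<otimes>\<^bsub>G\<^esub> fst b \<otimes>\<^bsub>G\<^esub> inv\<^bsub>G\<^esub> (s (snd a)),
                    snd a \<otimes>\<^bsub>H\<^esub> snd b)),
     one = (\<one>\<^bsub>N\<^esub>, \<one>\<^bsub>H\<^esub>)\<rparr>"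

end

(*
  A dc-automorphism (f, D_f) of U acts on the distance set by D_f; this gives pi, whose kernel is
  Iso(U). To split pi we use a concrete copy of U: the space FS of finitely supported functions
  u : Q>0 -> Q, where d(u, v) is the largest point at which u and v differ and u < v iff u is
  smaller there. A back-and-forth argument shows that U is isomorphic to FS; forth steps use the
  extension property of U, back steps an explicit one-point extension in FS, obtained by grafting
  a new coordinate onto the image of a nearest point. An order automorphism h of Q>=0 acts on FS
  by moving supports, (h.u)(h r) = u r; this transforms distances by h and preserves the order,
  so transporting it to U gives a homomorphic section s of pi. The section is continuous because
  h.u only depends on h on the finite support of u. Finally, a continuous homomorphic section of
  a continuous epimorphism of topological groups splits it: (n, h) |-> n s(h) is an isomorphism
  from the semidirect product and a homeomorphism, and pi is open, being a projection composed
  with the inverse homeomorphism.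
*)

theory Submission
  imports Defs "HOL-Algebra.Bij"
begin

section \<open>Topological groups split by a continuous section\<close>

lemma topological_group_subgroup:
  assumes TG: "topological_group G T" and K: "subgroup K G"
  shows "topological_group (G\<lparr>carrier := K\<rparr>) (subtopology T K)"
  unfolding topological_group_def
proof (intro conjI)
  have G: "group G" and top: "topspace T = carrier G"
    and mult: "continuous_map (prod_topology T T) T (\<lambda>(x, y). x \<otimes>\<^bsub>G\<^esub> y)"
    and inv: "continuous_map T T (\<lambda>x. inv\<^bsub>G\<^esub> x)"
    using TG unfolding topological_group_def by auto
  show "group (G\<lparr>carrier := K\<rparr>)" by (rule subgroup.subgroup_is_group[OF K G])
  show "topspace (subtopology T K) = carrier (G\<lparr>carrier := K\<rparr>)"
    using subgroup.subset[OF K] top by auto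
  have "continuous_map (subtopology (prod_topology T T) (K \<times> K)) T (\<lambda>(x, y). x \<otimes>\<^bsub>G\<^esub> y)"
    by (rule continuous_map_from_subtopology[OF mult])
  then show "continuous_map (prod_topology (subtopology T K) (subtopology T K)) (subtopology T K)
      (\<lambda>(x, y). x \<otimes>\<^bsub>G\<lparr>carrier := K\<rparr>\<^esub> y)"
    by (auto simp: subtopology_Times continuous_map_in_subtopology subgroup.m_closed[OF K])
  have "continuous_map (subtopology T K) (subtopology T K) (\<lambda>x. inv\<^bsub>G\<^esub> x)"
    using continuous_map_from_subtopology[OF inv]
    by (auto simp: continuous_map_in_subtopology subgroup.m_inv_closed[OF K])
  then show "continuous_map (subtopology T K) (subtopology T K) (\<lambda>x. inv\<^bsub>G\<lparr>carrier := K\<rparr>\<^esub> x)"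
    by (rule continuous_map_eq) (use subgroup.subset[OF K] top group.m_inv_consistent[OF G K] in auto)
qed

lemma topological_group_DirProd:
  assumes TG: "topological_group G TG" and TH: "topological_group H TH"
  shows "topological_group (G \<times>\<times> H) (prod_topology TG TH)"
  unfolding topological_group_def
proof (intro conjI)
  have G: "group G" and topG: "topspace TG = carrier G"
    and multG: "continuous_map (prod_topology TG TG) TG (\<lambda>(x, y). x \<otimes>\<^bsub>G\<^esub> y)"
    and invG: "continuous_map TG TG (\<lambda>x. inv\<^bsub>G\<^esub> x)"
    using TG unfolding topological_group_def by auto
  have H: "group H" and topH: "topspace TH = carrier H"
    and multH: "continuous_map (prod_topology TH TH) TH (\<lambda>(x, y). x \<otimes>\<^bsub>H\<^esub> y)"
    and invH: "continuous_map TH TH (\<lambda>x. inv\<^bsub>H\<^esub> x)"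
    using TH unfolding topological_group_def by auto
  show "group (G \<times>\<times> H)" by (rule DirProd_group[OF G H])
  show "topspace (prod_topology TG TH) = carrier (G \<times>\<times> H)" using topG topH by simp
  let ?P = "prod_topology (prod_topology TG TH) (prod_topology TG TH)"
  have "continuous_map ?P (prod_topology TG TG) (\<lambda>z. (fst (fst z), fst (snd z)))"
    using continuous_map_compose[OF continuous_map_fst continuous_map_fst]
      continuous_map_compose[OF continuous_map_snd continuous_map_fst]
    by (auto simp: o_def intro!: continuous_map_pairedI)
  from continuous_map_compose[OF this multG]
  have "continuous_map ?P TG (\<lambda>z. fst (fst z) \<otimes>\<^bsub>G\<^esub> fst (snd z))" by (simp add: o_def)
  moreover have "continuous_map ?P (prod_topology TH TH) (\<lambda>z. (snd (fst z), snd (snd z)))"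
    using continuous_map_compose[OF continuous_map_fst continuous_map_snd]
      continuous_map_compose[OF continuous_map_snd continuous_map_snd]
    by (auto simp: o_def intro!: continuous_map_pairedI)
  from continuous_map_compose[OF this multH]
  have "continuous_map ?P TH (\<lambda>z. snd (fst z) \<otimes>\<^bsub>H\<^esub> snd (snd z))" by (simp add: o_def)
  ultimately have "continuous_map ?P (prod_topology TG TH)
      (\<lambda>z. (fst (fst z) \<otimes>\<^bsub>G\<^esub> fst (snd z), snd (fst z) \<otimes>\<^bsub>H\<^esub> snd (snd z)))"
    by (rule continuous_map_pairedI)
  then show "continuous_map ?P (prod_topology TG TH) (\<lambda>(x, y). x \<otimes>\<^bsub>G \<times>\<times> H\<^esub> y)"
    by (simp add: mult_DirProd' case_prod_unfold)
  have "continuous_map (prod_topology TG TH) (prod_topology TG TH) (\<lambda>x. (inv\<^bsub>G\<^esub> fst x, inv\<^bsub>H\<^esub> snd x))"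
    using continuous_map_compose[OF continuous_map_fst invG] continuous_map_compose[OF continuous_map_snd invH]
    by (auto simp: o_def intro!: continuous_map_pairedI)
  then show "continuous_map (prod_topology TG TH) (prod_topology TG TH) (\<lambda>x. inv\<^bsub>G \<times>\<times> H\<^esub> x)"
    by (rule continuous_map_eq) (use topG topH G H in \<open>auto simp: inv_DirProd\<close>)
qed

locale split_epi = p: group_hom G H p + s: group_hom H G s
  for G H p s +
  assumes p_s: "\<And>h. h \<in> carrier H \<Longrightarrow> p (s h) = h"
begin

abbreviation "K \<equiv> kernel G H p"

lemma kernel_subset: "K \<subseteq> carrier G"
  by (auto simp: kernel_def)

lemma kernel_part: "g \<in> carrier G \<Longrightarrow> g \<otimes>\<^bsub>G\<^esub> inv\<^bsub>G\<^esub> s (p g) \<in> K"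
  using p_s[of "p g"] by (simp add: kernel_def p.hom_mult p.hom_inv)

lemma decompose: "g \<in> carrier G \<Longrightarrow> (g \<otimes>\<^bsub>G\<^esub> inv\<^bsub>G\<^esub> s (p g)) \<otimes>\<^bsub>G\<^esub> s (p g) = g"
  by (simp add: p.G.m_assoc)

lemma recompose:
  assumes "n \<in> K" "h \<in> carrier H"
  shows "p (n \<otimes>\<^bsub>G\<^esub> s h) = h" "(n \<otimes>\<^bsub>G\<^esub> s h) \<otimes>\<^bsub>G\<^esub> inv\<^bsub>G\<^esub> s (p (n \<otimes>\<^bsub>G\<^esub> s h)) = n"
  using assms kernel_subset p_s by (auto simp: kernel_def p.hom_mult p.G.m_assoc)

lemma semidirect_iso: "(\<lambda>(n, h). n \<otimes>\<^bsub>G\<^esub> s h) \<in> iso (semidirect (G\<lparr>carrier := K\<rparr>) H G s) G"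
proof -
  let ?S = "semidirect (G\<lparr>carrier := K\<rparr>) H G s"
  have carrier: "carrier ?S = K \<times> carrier H" by (simp add: semidirect_def)
  have hom: "(\<lambda>(n, h). n \<otimes>\<^bsub>G\<^esub> s h) \<in> hom ?S G"
  proof (rule homI)
    fix a b assume "a \<in> carrier ?S" "b \<in> carrier ?S"
    then obtain n h n' h' where ab: "a = (n, h)" "b = (n', h')"
      and "n \<in> K" "n' \<in> K" and h: "h \<in> carrier H" "h' \<in> carrier H"
      using carrier by auto
    then have n: "n \<in> carrier G" "n' \<in> carrier G" using kernel_subset by auto
    show "(case a \<otimes>\<^bsub>?S\<^esub> b of (n, h) \<Rightarrow> n \<otimes>\<^bsub>G\<^esub> s h) =
        (case a of (n, h) \<Rightarrow> n \<otimes>\<^bsub>G\<^esub> s h) \<otimes>\<^bsub>G\<^esub> (case b of (n, h) \<Rightarrow> n \<otimes>\<^bsub>G\<^esub> s h)"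
    proof -
      have "inv\<^bsub>G\<^esub> s h \<otimes>\<^bsub>G\<^esub> (s h \<otimes>\<^bsub>G\<^esub> s h') = s h'"
        using h by (simp add: p.G.m_assoc[symmetric])
      then show ?thesis using n h by (simp add: ab semidirect_def s.hom_mult p.G.m_assoc)
    qed
  qed (use carrier kernel_subset in auto)
  have "bij_betw (\<lambda>(n, h). n \<otimes>\<^bsub>G\<^esub> s h) (K \<times> carrier H) (carrier G)"
    by (rule bij_betw_byWitness[where f' = "\<lambda>g. (g \<otimes>\<^bsub>G\<^esub> inv\<^bsub>G\<^esub> s (p g), p g)"])
      (use kernel_subset kernel_part decompose recompose in auto)
  with hom carrier show ?thesis by (simp add: iso_def)
qed

end

locale topological_split_epi = split_epi +
  fixes TG TH
  assumes TG: "topological_group G TG" and TH: "topological_group H TH"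
    and continuous_p: "continuous_map TG TH p" and continuous_s: "continuous_map TH TG s"
begin

lemma topspace_TG: "topspace TG = carrier G"
  using TG by (simp add: topological_group_def)

lemma topspace_TH: "topspace TH = carrier H"
  using TH by (simp add: topological_group_def)

lemma homeomorphic_maps_decompose:
  "homeomorphic_maps (prod_topology (subtopology TG K) TH) TG
     (\<lambda>(n, h). n \<otimes>\<^bsub>G\<^esub> s h) (\<lambda>g. (g \<otimes>\<^bsub>G\<^esub> inv\<^bsub>G\<^esub> s (p g), p g))"
  unfolding homeomorphic_maps_def
proof (intro conjI ballI)
  have mult: "continuous_map (prod_topology TG TG) TG (\<lambda>(x, y). x \<otimes>\<^bsub>G\<^esub> y)"
    and inv: "continuous_map TG TG (\<lambda>x. inv\<^bsub>G\<^esub> x)"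
    using TG by (auto simp: topological_group_def)
  have "continuous_map (prod_topology (subtopology TG K) TH) TG fst"
    by (rule continuous_map_into_fulltopology[OF continuous_map_fst])
  moreover have "continuous_map (prod_topology (subtopology TG K) TH) TG (\<lambda>z. s (snd z))"
    using continuous_map_compose[OF continuous_map_snd continuous_s] by (simp add: o_def)
  ultimately have "continuous_map (prod_topology (subtopology TG K) TH) (prod_topology TG TG)
      (\<lambda>z. (fst z, s (snd z)))"
    by (rule continuous_map_pairedI)
  from continuous_map_compose[OF this mult]
  show "continuous_map (prod_topology (subtopology TG K) TH) TG (\<lambda>(n, h). n \<otimes>\<^bsub>G\<^esub> s h)"
    by (simp add: o_def case_prod_unfold)
  have "continuous_map TG (prod_topology TG TG) (\<lambda>g. (g, inv\<^bsub>G\<^esub> s (p g)))"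
    using continuous_map_compose[OF continuous_map_compose[OF continuous_p continuous_s] inv]
    by (simp add: o_def continuous_map_pairedI)
  from continuous_map_compose[OF this mult]
  have "continuous_map TG TG (\<lambda>g. g \<otimes>\<^bsub>G\<^esub> inv\<^bsub>G\<^esub> s (p g))"
    by (simp add: o_def)
  then have "continuous_map TG (subtopology TG K) (\<lambda>g. g \<otimes>\<^bsub>G\<^esub> inv\<^bsub>G\<^esub> s (p g))"
    using kernel_part topspace_TG by (auto simp: continuous_map_in_subtopology)
  then show "continuous_map TG (prod_topology (subtopology TG K) TH) (\<lambda>g. (g \<otimes>\<^bsub>G\<^esub> inv\<^bsub>G\<^esub> s (p g), p g))"
    using continuous_p by (rule continuous_map_pairedI)
  show "(\<lambda>g. (g \<otimes>\<^bsub>G\<^esub> inv\<^bsub>G\<^esub> s (p g), p g)) ((\<lambda>(n, h). n \<otimes>\<^bsub>G\<^esub> s h) x) = x"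
    if "x \<in> topspace (prod_topology (subtopology TG K) TH)" for x
    using that recompose topspace_TH by auto
  show "(\<lambda>(n, h). n \<otimes>\<^bsub>G\<^esub> s h) ((\<lambda>g. (g \<otimes>\<^bsub>G\<^esub> inv\<^bsub>G\<^esub> s (p g), p g)) y) = y"
    if "y \<in> topspace TG" for y
    using that decompose topspace_TG by auto
qed

lemma short_exact: "short_exact_top (G\<lparr>carrier := K\<rparr>) (subtopology TG K) G TG H TH (\<lambda>x. x) p"
  unfolding short_exact_top_def
proof (intro conjI)
  show "topological_group (G\<lparr>carrier := K\<rparr>) (subtopology TG K)"
    by (rule topological_group_subgroup[OF TG p.subgroup_kernel])
  show "topological_group G TG" by (fact TG)
  show "topological_group H TH" by (fact TH)
  show "(\<lambda>x. x) \<in> hom (G\<lparr>carrier := K\<rparr>) G" using kernel_subset by (auto simp: hom_def)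
  show "inj_on (\<lambda>x. x) (carrier (G\<lparr>carrier := K\<rparr>))" by simp
  show "continuous_map (subtopology TG K) TG (\<lambda>x. x)"
    by (rule continuous_map_into_fulltopology[OF continuous_map_id, unfolded id_def])
  have "subtopology TG ((\<lambda>x. x) ` topspace (subtopology TG K)) = subtopology TG K"
    using kernel_subset topspace_TG by (simp add: Int_absorb1)
  then show "embedding_map (subtopology TG K) TG (\<lambda>x. x)"
    using homeomorphic_map_id[of "subtopology TG K"] by (simp add: embedding_map_def id_def)
  show "p \<in> hom G H" by (fact p.homh)
  show "p ` carrier G = carrier H"
  proof
    show "carrier H \<subseteq> p ` carrier G"
      using p_s s.hom_closed by (metis image_eqI subsetI)
    show "p ` carrier G \<subseteq> carrier H"
      using p.hom_closed by blast
  qed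
  show "continuous_map TG TH p" by (fact continuous_p)
  have "open_map TG (prod_topology (subtopology TG K) TH) (\<lambda>g. (g \<otimes>\<^bsub>G\<^esub> inv\<^bsub>G\<^esub> s (p g), p g))"
    using homeomorphic_maps_decompose[unfolded homeomorphic_maps_sym[of _ TG]]
    by (intro homeomorphic_imp_open_map homeomorphic_maps_imp_map)
  from open_map_compose[OF this open_map_snd]
  show "open_map TG TH p" by (simp add: o_def)
  show "(\<lambda>x. x) ` carrier (G\<lparr>carrier := K\<rparr>) = K" by simp
qed

end

section \<open>Groups of permutations with the topology of pointwise convergence\<close>

text \<open>The subgroup C of BijGroup S, but multiplied by plain composition, as in AutQ and AutU.\<close>

definition perm_monoid :: "'b set \<Rightarrow> ('b \<Rightarrow> 'b) set \<Rightarrow> ('b \<Rightarrow> 'b) monoid" where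
  "perm_monoid S C = \<lparr>carrier = C, mult = compose S, one = restrict id S\<rparr>"

lemma mult_BijGroup: "f \<in> Bij S \<Longrightarrow> g \<in> Bij S \<Longrightarrow> f \<otimes>\<^bsub>BijGroup S\<^esub> g = compose S f g"
  by (simp add: BijGroup_def)

lemma one_BijGroup: "\<one>\<^bsub>BijGroup S\<^esub> = restrict id S"
  by (simp add: BijGroup_def id_def)

lemma group_perm_monoid:
  assumes C: "subgroup C (BijGroup S)"
  shows "group (perm_monoid S C)"
proof -
  have B: "f \<in> Bij S" if "f \<in> C" for f
    using subgroup.subset[OF C] that by (auto simp: BijGroup_def)
  show ?thesis
  proof (rule groupI, unfold perm_monoid_def monoid.select_convs partial_object.select_convs)
    fix f g assume f: "f \<in> C" and g: "g \<in> C"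
    show "compose S f g \<in> C"
      using subgroup.m_closed[OF C f g] by (simp add: mult_BijGroup B f g)
  next
    fix f g h assume h: "h \<in> C"
    show "compose S (compose S f g) h = compose S f (compose S g h)"
      by (rule compose_assoc[symmetric]) (rule Bij_imp_funcset[OF B[OF h]])
  next
    show "restrict id S \<in> C"
      using subgroup.one_closed[OF C] by (simp add: one_BijGroup)
  next
    fix f assume f: "f \<in> C"
    show "compose S (restrict id S) f = f"
      using Id_compose[OF Bij_imp_funcset Bij_imp_extensional, OF B[OF f] B[OF f]]
      by (simp add: id_def)
    have "restrict (inv_into S f) S \<in> C"
      using subgroup.m_inv_closed[OF C f] by (simp add: inv_BijGroup B f)
    moreover have "compose S (restrict (inv_into S f) S) f = restrict id S"
      using Bij_compose_restrict_eq[OF B[OF f]] by (simp add: id_def)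
    ultimately show "\<exists>g\<in>C. compose S g f = restrict id S" by blast
  qed
qed

lemma inv_perm_monoid:
  assumes C: "subgroup C (BijGroup S)" and f: "f \<in> C"
  shows "inv\<^bsub>perm_monoid S C\<^esub> f = restrict (inv_into S f) S"
proof (rule group.inv_equality[OF group_perm_monoid[OF C]])
  have B: "f \<in> Bij S" using subgroup.subset[OF C] f by (auto simp: BijGroup_def)
  then show "restrict (inv_into S f) S \<otimes>\<^bsub>perm_monoid S C\<^esub> f = \<one>\<^bsub>perm_monoid S C\<^esub>"
    using Bij_compose_restrict_eq[OF B] by (simp add: perm_monoid_def id_def)
  show "restrict (inv_into S f) S \<in> carrier (perm_monoid S C)"
    using subgroup.m_inv_closed[OF C f] by (simp add: perm_monoid_def inv_BijGroup B)
  show "f \<in> carrier (perm_monoid S C)" using f by (simp add: perm_monoid_def)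
qed

abbreviation pointwise_topology :: "'b set \<Rightarrow> ('b \<Rightarrow> 'b) topology" where
  "pointwise_topology S \<equiv> product_topology (\<lambda>_. discrete_topology S) S"

lemma Bij_in_pointwise_topology: "f \<in> Bij S \<Longrightarrow> f \<in> topspace (pointwise_topology S)"
  by (simp add: PiE_def Bij_imp_funcset Bij_imp_extensional)

lemma openin_pointwise_eval:
  assumes \<phi>: "continuous_map T (pointwise_topology S) \<phi>" and a: "a \<in> S"
  shows "openin T {t \<in> topspace T. \<phi> t a = b}"
proof -
  have c: "continuous_map T (discrete_topology S) (\<lambda>t. \<phi> t a)"
    using continuous_map_compose[OF \<phi> continuous_map_product_projection[OF a]] by (simp add: o_def)
  show ?thesis
  proof (cases "b \<in> S")
    case True
    then show ?thesis using openin_continuous_map_preimage[OF c, of "{b}"] by simp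
  next
    case False
    then have "{t \<in> topspace T. \<phi> t a = b} = {}"
      using continuous_map_image_subset_topspace[OF c] by auto
    then show ?thesis by (simp only: openin_empty)
  qed
qed

lemma continuous_map_pointwiseI:
  assumes "\<And>t. t \<in> topspace T \<Longrightarrow> \<phi> t \<in> S \<rightarrow>\<^sub>E S"
    and "\<And>a b. a \<in> S \<Longrightarrow> openin T {t \<in> topspace T. \<phi> t a = b}"
  shows "continuous_map T (pointwise_topology S) \<phi>"
  unfolding continuous_map_componentwise
proof (intro conjI ballI)
  show "\<phi> ` topspace T \<subseteq> extensional S" using assms(1) by (auto simp: PiE_def)
  fix a assume a: "a \<in> S"
  show "continuous_map T (discrete_topology S) (\<lambda>t. \<phi> t a)"
    unfolding continuous_map_def
  proof (intro conjI allI impI)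
    show "(\<lambda>t. \<phi> t a) \<in> topspace T \<rightarrow> topspace (discrete_topology S)" using assms(1) a by auto
    fix U
    have "{t \<in> topspace T. \<phi> t a \<in> U} = (\<Union>b\<in>U. {t \<in> topspace T. \<phi> t a = b})" by auto
    then show "openin T {t \<in> topspace T. \<phi> t a \<in> U}" using assms(2)[OF a] by auto
  qed
qed

lemma continuous_map_pointwise_compose:
  assumes \<phi>: "continuous_map T (pointwise_topology S) \<phi>" and \<psi>: "continuous_map T (pointwise_topology S) \<psi>"
  shows "continuous_map T (pointwise_topology S) (\<lambda>t. compose S (\<phi> t) (\<psi> t))"
proof (rule continuous_map_pointwiseI)
  have maps: "\<phi> t \<in> S \<rightarrow>\<^sub>E S" "\<psi> t \<in> S \<rightarrow>\<^sub>E S" if "t \<in> topspace T" for t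
    using that continuous_map_image_subset_topspace[OF \<phi>] continuous_map_image_subset_topspace[OF \<psi>]
    by auto
  then show "compose S (\<phi> t) (\<psi> t) \<in> S \<rightarrow>\<^sub>E S" if "t \<in> topspace T" for t
    using that by (auto simp: compose_def)
  fix a b assume a: "a \<in> S"
  have "\<psi> t a \<in> S" if "t \<in> topspace T" for t
    using maps(2)[OF that] a by auto
  then have "{t \<in> topspace T. compose S (\<phi> t) (\<psi> t) a = b}
      = (\<Union>c\<in>S. {t \<in> topspace T. \<psi> t a = c} \<inter> {t \<in> topspace T. \<phi> t c = b})"
    by (auto simp: compose_eq a)
  then show "openin T {t \<in> topspace T. compose S (\<phi> t) (\<psi> t) a = b}"
    using openin_pointwise_eval[OF \<phi>] openin_pointwise_eval[OF \<psi> a]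
    by (auto intro!: openin_Union openin_Int)
qed

lemma Bij_inv_into_eq_iff:
  assumes "f \<in> Bij S" "a \<in> S" "b \<in> S"
  shows "inv_into S f a = b \<longleftrightarrow> f b = a"
  using assms by (metis Bij_def IntD2 bij_betw_inv_into_right inv_into_f_f bij_betw_def mem_Collect_eq)

lemma continuous_map_pointwise_inv:
  assumes \<phi>: "continuous_map T (pointwise_topology S) \<phi>" and bij: "\<And>t. t \<in> topspace T \<Longrightarrow> \<phi> t \<in> Bij S"
  shows "continuous_map T (pointwise_topology S) (\<lambda>t. restrict (inv_into S (\<phi> t)) S)"
proof (rule continuous_map_pointwiseI)
  show "restrict (inv_into S (\<phi> t)) S \<in> S \<rightarrow>\<^sub>E S" if "t \<in> topspace T" for t
    using Bij_inv_into_mem[OF bij[OF that]] by auto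
  fix a b assume a: "a \<in> S"
  show "openin T {t \<in> topspace T. restrict (inv_into S (\<phi> t)) S a = b}"
  proof (cases "b \<in> S")
    case True
    have "{t \<in> topspace T. restrict (inv_into S (\<phi> t)) S a = b} = {t \<in> topspace T. \<phi> t b = a}"
      using a True Bij_inv_into_eq_iff[OF bij] by auto
    then show ?thesis using openin_pointwise_eval[OF \<phi> True] by simp
  next
    case False
    then have "{t \<in> topspace T. restrict (inv_into S (\<phi> t)) S a = b} = {}"
      using a Bij_inv_into_mem[OF bij] by auto
    then show ?thesis by (simp only: openin_empty)
  qed
qed

lemma topological_group_perm_monoid:
  assumes C: "subgroup C (BijGroup S)"
  shows "topological_group (perm_monoid S C) (subtopology (pointwise_topology S) C)"
  unfolding topological_group_def
proof (intro conjI)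
  have CB: "C \<subseteq> Bij S" using subgroup.subset[OF C] by (simp add: BijGroup_def)
  have top: "topspace (subtopology (pointwise_topology S) C) = C"
    using CB Bij_in_pointwise_topology by (auto simp del: topspace_product_topology)
  show "group (perm_monoid S C)" by (rule group_perm_monoid[OF C])
  show "topspace (subtopology (pointwise_topology S) C) = carrier (perm_monoid S C)"
    using top by (simp add: perm_monoid_def)
  let ?T = "subtopology (pointwise_topology S) C"
  have into: "continuous_map ?T (pointwise_topology S) (\<lambda>x. x)"
    by (rule continuous_map_into_fulltopology[OF continuous_map_id, unfolded id_def])
  have "continuous_map (prod_topology ?T ?T) (pointwise_topology S) (\<lambda>z. compose S (fst z) (snd z))"
    using continuous_map_compose[OF continuous_map_fst into] continuous_map_compose[OF continuous_map_snd into]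
    by (intro continuous_map_pointwise_compose) (simp_all add: o_def)
  moreover have "compose S (fst z) (snd z) \<in> C" if "z \<in> topspace (prod_topology ?T ?T)" for z
  proof -
    have "fst z \<in> C" "snd z \<in> C" using that top by (auto simp: mem_Times_iff)
    then show ?thesis using subgroup.m_closed[OF C] CB mult_BijGroup by (metis subsetD)
  qed
  ultimately show "continuous_map (prod_topology ?T ?T) ?T (\<lambda>(x, y). x \<otimes>\<^bsub>perm_monoid S C\<^esub> y)"
    by (auto simp: continuous_map_in_subtopology perm_monoid_def case_prod_unfold)
  have "continuous_map ?T (pointwise_topology S) (\<lambda>f. restrict (inv_into S f) S)"
    using top CB by (intro continuous_map_pointwise_inv[OF into]) auto
  moreover have "restrict (inv_into S f) S \<in> C" if "f \<in> C" for f
    using subgroup.m_inv_closed[OF C that] that CB by (auto simp: inv_BijGroup)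
  ultimately have "continuous_map ?T ?T (\<lambda>f. restrict (inv_into S f) S)"
    using top by (auto simp: continuous_map_in_subtopology)
  then show "continuous_map ?T ?T (\<lambda>x. inv\<^bsub>perm_monoid S C\<^esub> x)"
    by (rule continuous_map_eq) (use top inv_perm_monoid[OF C] in auto)
qed

lemma openin_pointwise_agree:
  assumes \<phi>: "continuous_map T (pointwise_topology S) \<phi>" and F: "finite F" "F \<subseteq> S"
  shows "openin T {t \<in> topspace T. \<forall>c\<in>F. \<phi> t c = g c}"
proof -
  have "openin T ((\<Inter>c\<in>F. {t \<in> topspace T. \<phi> t c = g c}) \<inter> topspace T)"
    using F openin_pointwise_eval[OF \<phi>] by (intro openin_INT) auto
  moreover have "(\<Inter>c\<in>F. {t \<in> topspace T. \<phi> t c = g c}) \<inter> topspace T = {t \<in> topspace T. \<forall>c\<in>F. \<phi> t c = g c}"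
    by auto
  ultimately show ?thesis by simp
qed

section \<open>Convexly ordered ultrametric spaces\<close>

lemma zero_Qnn [simp]: "0 \<in> Qnn"
  by (simp add: Qnn_def)

lemma pos_Qnn: "0 < r \<Longrightarrow> r \<in> Qnn"
  by (simp add: Qnn_def)

lemma ultrametric_on_in: "ultrametric_on Y E d \<Longrightarrow> x \<in> Y \<Longrightarrow> y \<in> Y \<Longrightarrow> d x y \<in> E"
  by (simp add: ultrametric_on_def)

lemma ultrametric_on_eq_0_iff: "ultrametric_on Y E d \<Longrightarrow> x \<in> Y \<Longrightarrow> y \<in> Y \<Longrightarrow> d x y = 0 \<longleftrightarrow> x = y"
  by (simp add: ultrametric_on_def)

lemma ultrametric_on_commute: "ultrametric_on Y E d \<Longrightarrow> x \<in> Y \<Longrightarrow> y \<in> Y \<Longrightarrow> d x y = d y x"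
  by (simp add: ultrametric_on_def)

lemma ultrametric_on_ultra:
  "ultrametric_on Y E d \<Longrightarrow> x \<in> Y \<Longrightarrow> y \<in> Y \<Longrightarrow> z \<in> Y \<Longrightarrow> d x z \<le> max (d x y) (d y z)"
  by (simp add: ultrametric_on_def)

lemma ultrametric_on_nonneg: "ultrametric_on Y E d \<Longrightarrow> E \<subseteq> Qnn \<Longrightarrow> x \<in> Y \<Longrightarrow> y \<in> Y \<Longrightarrow> 0 \<le> d x y"
  using ultrametric_on_in[of Y E d x y] by (auto simp: Qnn_def)

lemma ultrametric_on_nearest:
  assumes d: "ultrametric_on Y E d" and x: "x \<in> Y" and y0: "y0 \<in> Y" and y: "y \<in> Y"
    and nearest: "d x y0 \<le> d x y"
  shows "d x y = max (d x y0) (d y0 y)"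
proof -
  have "d x y \<le> max (d x y0) (d y0 y)" by (rule ultrametric_on_ultra[OF d x y0 y])
  moreover have "d y0 y \<le> max (d y0 x) (d x y)" by (rule ultrametric_on_ultra[OF d y0 x y])
  ultimately show ?thesis using nearest ultrametric_on_commute[OF d x y0] by linarith
qed

lemma strict_linear_on_irrefl: "strict_linear_on Y lt \<Longrightarrow> x \<in> Y \<Longrightarrow> \<not> lt x x"
  by (simp add: strict_linear_on_def)

lemma strict_linear_on_trans:
  "strict_linear_on Y lt \<Longrightarrow> x \<in> Y \<Longrightarrow> y \<in> Y \<Longrightarrow> z \<in> Y \<Longrightarrow> lt x y \<Longrightarrow> lt y z \<Longrightarrow> lt x z"
  unfolding strict_linear_on_def by blast

lemma strict_linear_on_total:
  "strict_linear_on Y lt \<Longrightarrow> x \<in> Y \<Longrightarrow> y \<in> Y \<Longrightarrow> x \<noteq> y \<Longrightarrow> lt x y \<or> lt y x"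
  unfolding strict_linear_on_def by blast

lemma strict_linear_on_asym:
  "strict_linear_on Y lt \<Longrightarrow> x \<in> Y \<Longrightarrow> y \<in> Y \<Longrightarrow> lt x y \<Longrightarrow> \<not> lt y x"
  using strict_linear_on_irrefl strict_linear_on_trans by metis

lemma strict_linear_on_reflect:
  assumes "strict_linear_on X lt" and "f ` X \<subseteq> X"
    and "\<And>x y. x \<in> X \<Longrightarrow> y \<in> X \<Longrightarrow> lt x y \<Longrightarrow> lt (f x) (f y)"
    and "x \<in> X" "y \<in> X" "lt (f x) (f y)"
  shows "lt x y"
  using assms unfolding strict_linear_on_def by (metis image_subset_iff)

lemma cous_ultrametric_on: "cous Y d E lt \<Longrightarrow> ultrametric_on Y E d"
  by (simp add: cous_def)

lemma cous_strict_linear_on: "cous Y d E lt \<Longrightarrow> strict_linear_on Y lt"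
  by (simp add: cous_def convex_order_def)

lemma cous_closed_ball:
  assumes "cous Y d E lt" "x \<in> Y" "a \<in> Y" "c \<in> Y" "y \<in> Y" "d x a \<le> r" "d x c \<le> r" "lt a y" "lt y c"
  shows "d x y \<le> r"
  using assms unfolding cous_def convex_order_def convex_in_def by blast

lemma cous_open_ball:
  assumes "cous Y d E lt" "x \<in> Y" "a \<in> Y" "c \<in> Y" "y \<in> Y" "d x a < r" "d x c < r" "lt a y" "lt y c"
  shows "d x y < r"
  using assms unfolding cous_def convex_order_def convex_in_def by blast

lemma cous_outside_ball:
  assumes Y: "cous Y d E lt" and c: "c \<in> Y" and b: "b \<in> Y" and y: "y \<in> Y"
    and "d c b \<le> r" and "\<not> d c y \<le> r"
  shows "lt c y \<longleftrightarrow> lt b y" "lt y c \<longleftrightarrow> lt y b"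
proof -
  have um: "ultrametric_on Y E d" and lin: "strict_linear_on Y lt"
    using Y by (simp_all add: cous_ultrametric_on cous_strict_linear_on)
  have cc: "d c c \<le> r"
    using assms(5) ultrametric_on_nonneg[OF um _ c b] ultrametric_on_eq_0_iff[OF um c c] Y
    by (simp add: cous_def)
  have "y \<noteq> c" "y \<noteq> b" using assms(5,6) cc by auto
  then have tot: "lt c y \<or> lt y c" "lt b y \<or> lt y b" "\<not> (lt c y \<and> lt y c)" "\<not> (lt b y \<and> lt y b)"
    using lin c b y unfolding strict_linear_on_def by blast+
  have "\<not> (lt c y \<and> lt y b)" "\<not> (lt b y \<and> lt y c)"
    using cous_closed_ball[OF Y c c b y cc assms(5)] cous_closed_ball[OF Y c b c y assms(5) cc] assms(6)
    by blast+
  then show "lt c y \<longleftrightarrow> lt b y" "lt y c \<longleftrightarrow> lt y b" using tot by blast+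
qed

lemma ultrametric_on_subset: "ultrametric_on Y E d \<Longrightarrow> Z \<subseteq> Y \<Longrightarrow> ultrametric_on Z E d"
  unfolding ultrametric_on_def by (meson subsetD)

lemma ultrametric_on_pullback:
  assumes S: "ultrametric_on S E' dd" and inj: "inj_on h Y" and hY: "h ` Y \<subseteq> S"
    and dE: "\<forall>i\<in>Y. \<forall>j\<in>Y. dd (h i) (h j) \<in> E"
  shows "ultrametric_on Y E (\<lambda>i j. dd (h i) (h j))"
  unfolding ultrametric_on_def
proof (intro conjI ballI)
  have hS: "h i \<in> S" if "i \<in> Y" for i using hY that by auto
  fix x y assume x: "x \<in> Y" and y: "y \<in> Y"
  show "dd (h x) (h y) \<in> E" using dE x y by blast
  show "dd (h x) (h y) = 0 \<longleftrightarrow> x = y"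
    using ultrametric_on_eq_0_iff[OF S hS[OF x] hS[OF y]] inj_onD[OF inj _ x y] by auto
  show "dd (h x) (h y) = dd (h y) (h x)" by (rule ultrametric_on_commute[OF S hS[OF x] hS[OF y]])
  fix z assume z: "z \<in> Y"
  show "dd (h x) (h z) \<le> max (dd (h x) (h y)) (dd (h y) (h z))"
    by (rule ultrametric_on_ultra[OF S hS[OF x] hS[OF y] hS[OF z]])
qed

lemma strict_linear_on_pullback:
  assumes S: "strict_linear_on S ll" and inj: "inj_on h Y" and hY: "h ` Y \<subseteq> S"
  shows "strict_linear_on Y (\<lambda>i j. ll (h i) (h j))"
  unfolding strict_linear_on_def
proof (intro conjI ballI impI)
  have hS: "h i \<in> S" if "i \<in> Y" for i using hY that by auto
  fix x assume x: "x \<in> Y"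
  then show "\<not> ll (h x) (h x)" using strict_linear_on_irrefl[OF S hS] by blast
  fix y z assume "y \<in> Y" "z \<in> Y" "ll (h x) (h y) \<and> ll (h y) (h z)"
  then show "ll (h x) (h z)" using strict_linear_on_trans[OF S hS[OF x] hS hS] by blast
next
  fix x y assume "x \<in> Y" "y \<in> Y" "x \<noteq> y"
  then show "ll (h x) (h y) \<or> ll (h y) (h x)"
    using strict_linear_on_total[OF S] hY inj_onD[OF inj] by blast
qed

lemma cous_pullback:
  assumes S: "cous S dd Qnn ll" and inj: "inj_on h Y" and hY: "h ` Y \<subseteq> S"
    and E: "E \<subseteq> Qnn" "0 \<in> E" and dE: "\<forall>i\<in>Y. \<forall>j\<in>Y. dd (h i) (h j) \<in> E"
  shows "cous Y (\<lambda>i j. dd (h i) (h j)) E (\<lambda>i j. ll (h i) (h j))"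
proof -
  have hS: "h i \<in> S" if "i \<in> Y" for i using hY that by auto
  have "convex_in Y (\<lambda>i j. ll (h i) (h j)) {y \<in> Y. dd (h x) (h y) \<le> r}
      \<and> convex_in Y (\<lambda>i j. ll (h i) (h j)) {y \<in> Y. dd (h x) (h y) < r}" if x: "x \<in> Y" for x r
    unfolding convex_in_def
  proof (intro conjI ballI impI)
    fix a c y assume "a \<in> {y \<in> Y. dd (h x) (h y) \<le> r}" "c \<in> {y \<in> Y. dd (h x) (h y) \<le> r}"
      and y: "y \<in> Y" and "ll (h a) (h y) \<and> ll (h y) (h c)"
    then have "h a \<in> S" "h c \<in> S" "dd (h x) (h a) \<le> r" "dd (h x) (h c) \<le> r" "ll (h a) (h y)" "ll (h y) (h c)"
      using hS by auto
    then show "y \<in> {y \<in> Y. dd (h x) (h y) \<le> r}"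
      using cous_closed_ball[OF S hS[OF x] _ _ hS[OF y]] y by blast
  next
    fix a c y assume "a \<in> {y \<in> Y. dd (h x) (h y) < r}" "c \<in> {y \<in> Y. dd (h x) (h y) < r}"
      and y: "y \<in> Y" and "ll (h a) (h y) \<and> ll (h y) (h c)"
    then have "h a \<in> S" "h c \<in> S" "dd (h x) (h a) < r" "dd (h x) (h c) < r" "ll (h a) (h y)" "ll (h y) (h c)"
      using hS by auto
    then show "y \<in> {y \<in> Y. dd (h x) (h y) < r}"
      using cous_open_ball[OF S hS[OF x] _ _ hS[OF y]] y by blast
  qed
  then show ?thesis
    using E ultrametric_on_pullback[OF cous_ultrametric_on[OF S] inj hY dE]
      strict_linear_on_pullback[OF cous_strict_linear_on[OF S] inj hY]
    by (simp add: cous_def convex_order_def)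
qed

lemma dense_separation:
  fixes L U :: "'a :: {dense_linorder, no_top, no_bot} set"
  assumes "finite L" "finite U" "\<forall>l\<in>L. \<forall>u\<in>U. l < u"
  shows "\<exists>v. (\<forall>l\<in>L. l < v) \<and> (\<forall>u\<in>U. v < u)"
proof (cases "L = {}"; cases "U = {}")
  assume "L \<noteq> {}" "U \<noteq> {}"
  then have "Max L < Min U" using assms Max_in Min_in by blast
  then obtain v where "Max L < v" "v < Min U" using dense by blast
  then show ?thesis using assms(1,2) Max_ge Min_le by (meson le_less_trans less_le_trans)
next
  assume "L = {}" "U \<noteq> {}"
  obtain v where "v < Min U" using lt_ex by blast
  then have "\<forall>u\<in>U. v < u" using Min_le[OF assms(2)] by (meson less_le_trans)
  then show ?thesis using \<open>L = {}\<close> by blast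
next
  assume "L \<noteq> {}" "U = {}"
  obtain v where "Max L < v" using gt_ex by blast
  then have "\<forall>l\<in>L. l < v" using Max_ge[OF assms(1)] by (meson le_less_trans)
  then show ?thesis using \<open>U = {}\<close> by blast
qed auto

lemma cous_code_nat:
  assumes S: "cous S dd Qnn ll" and B: "finite B" "B \<subseteq> S"
  shows "cous (to_nat_on B ` B) (\<lambda>i j. dd (from_nat_into B i) (from_nat_into B j))
      (insert 0 ((\<lambda>(a, b). dd a b) ` (B \<times> B))) (\<lambda>i j. ll (from_nat_into B i) (from_nat_into B j))"
proof (rule cous_pullback[OF S])
  have B': "countable B" using B by (simp add: countable_finite)
  then show "inj_on (from_nat_into B) (to_nat_on B ` B)"
    by (intro inj_on_inverseI[where g = "to_nat_on B"]) auto
  show "from_nat_into B ` to_nat_on B ` B \<subseteq> S" using B B' by auto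
  show "insert 0 ((\<lambda>(a, b). dd a b) ` (B \<times> B)) \<subseteq> Qnn"
    using ultrametric_on_in[OF cous_ultrametric_on[OF S]] B by auto
  show "\<forall>i\<in>to_nat_on B ` B. \<forall>j\<in>to_nat_on B ` B.
      dd (from_nat_into B i) (from_nat_into B j) \<in> insert 0 ((\<lambda>(a, b). dd a b) ` (B \<times> B))"
    using B' by auto
qed simp

lemma dc_emb_id:
  assumes X: "ultrametric_on X Qnn d" and Y: "ultrametric_on Y E dY" and E: "E \<subseteq> Qnn"
    and f: "f ` Y \<subseteq> X"
    and dist: "\<And>x y. x \<in> Y \<Longrightarrow> y \<in> Y \<Longrightarrow> d (f x) (f y) = dY x y"
    and order: "\<And>x y. x \<in> Y \<Longrightarrow> y \<in> Y \<Longrightarrow> ltY x y \<Longrightarrow> lt (f x) (f y)"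
  shows "dc_emb Y dY E ltY X d Qnn lt f id"
proof -
  have "inj_on f Y"
  proof (rule inj_onI)
    fix x y assume xy: "x \<in> Y" "y \<in> Y" "f x = f y"
    then have "dY x y = 0" using dist ultrametric_on_eq_0_iff[OF X] f by (metis image_subset_iff)
    then show "x = y" using ultrametric_on_eq_0_iff[OF Y xy(1,2)] by blast
  qed
  then show ?thesis using f E dist order by (auto simp: dc_emb_def strict_mono_on_def)
qed

text \<open>The extension property quantifies over structures on nat; finite substructures of
any other space are transported there along to_nat_on.\<close>

lemma extension_property_finite:
  assumes ext: "extension_property X d lt" and X: "cous X d Qnn lt" and S: "cous S dd Qnn ll"
    and B: "finite B" "B \<subseteq> S" and A: "A \<subseteq> B" and f: "\<And>a. a \<in> A \<Longrightarrow> f a \<in> X"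
    and iso: "\<And>a b. a \<in> A \<Longrightarrow> b \<in> A \<Longrightarrow> d (f a) (f b) = dd a b \<and> (ll a b \<longrightarrow> lt (f a) (f b))"
  obtains g where "\<And>b. b \<in> B \<Longrightarrow> g b \<in> X" "\<And>a. a \<in> A \<Longrightarrow> g a = f a"
    "\<And>a b. a \<in> B \<Longrightarrow> b \<in> B \<Longrightarrow> d (g a) (g b) = dd a b \<and> (ll a b \<longrightarrow> lt (g a) (g b))"
proof -
  let ?enc = "to_nat_on B" and ?dec = "from_nat_into B"
  define E where "E = insert 0 ((\<lambda>(a, b). dd a b) ` (B \<times> B))"
  define dY where "dY i j = dd (?dec i) (?dec j)" for i j
  define ltY where "ltY i j = ll (?dec i) (?dec j)" for i j
  have dec_enc: "?dec (?enc b) = b" if "b \<in> B" for b using that B by (simp add: countable_finite)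
  then have dec_enc_A: "?dec (?enc a) = a" if "a \<in> A" for a using that A by blast
  have Y: "cous (?enc ` B) dY E ltY"
    unfolding dY_def[abs_def] ltY_def[abs_def] E_def by (rule cous_code_nat[OF S B])
  moreover have "dc_emb (?enc ` A) dY E ltY X d Qnn lt (f \<circ> ?dec) id"
  proof (rule dc_emb_id[OF cous_ultrametric_on[OF X] ultrametric_on_subset[OF cous_ultrametric_on[OF Y]]])
    show "?enc ` A \<subseteq> ?enc ` B" "(f \<circ> ?dec) ` ?enc ` A \<subseteq> X" using A f dec_enc_A by auto
    show "E \<subseteq> Qnn" using Y by (simp add: cous_def)
    show "d ((f \<circ> ?dec) i) ((f \<circ> ?dec) j) = dY i j" if "i \<in> ?enc ` A" "j \<in> ?enc ` A" for i j
      using that iso by (auto simp: dY_def dec_enc_A)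
    show "lt ((f \<circ> ?dec) i) ((f \<circ> ?dec) j)" if "i \<in> ?enc ` A" "j \<in> ?enc ` A" "ltY i j" for i j
      using that iso by (auto simp: ltY_def dec_enc_A)
  qed
  moreover have "dY i j \<in> E" if "i \<in> ?enc ` A" "j \<in> ?enc ` A" for i j
  proof -
    from that obtain a b where ab: "a \<in> A" "b \<in> A" "i = ?enc a" "j = ?enc b" by blast
    then have "dY i j = (\<lambda>(a, b). dd a b) (a, b)" by (simp add: dY_def dec_enc_A)
    moreover have "(a, b) \<in> B \<times> B" using ab A by auto
    ultimately show ?thesis unfolding E_def by blast
  qed
  ultimately have "\<exists>g Dg. dc_emb (?enc ` B) dY E ltY X d Qnn lt g Dg \<and>
      (\<forall>i\<in>?enc ` A. g i = (f \<circ> ?dec) i) \<and> (\<forall>e\<in>E. Dg e = id e)"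
    using B A
    by (intro ext[unfolded extension_property_def, rule_format, where Y = "?enc ` B" and dY = dY
          and E = E and ltY = ltY and Y' = "?enc ` A" and E' = E and f = "f \<circ> ?dec" and Df = id])
      (auto simp: E_def dY_def image_iff)
  then obtain g Dg where g: "dc_emb (?enc ` B) dY E ltY X d Qnn lt g Dg"
    and g_f: "\<forall>i\<in>?enc ` A. g i = (f \<circ> ?dec) i" and Dg: "\<forall>e\<in>E. Dg e = e"
    by auto
  show ?thesis
  proof
    show "g (?enc b) \<in> X" if "b \<in> B" for b using g that by (auto simp: dc_emb_def)
    show "g (?enc a) = f a" if "a \<in> A" for a using g_f that dec_enc_A by auto
    fix a b assume ab: "a \<in> B" "b \<in> B"
    have "dY (?enc a) (?enc b) \<in> E" using ab dec_enc by (auto simp: E_def dY_def)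
    then show "d (g (?enc a)) (g (?enc b)) = dd a b \<and> (ll a b \<longrightarrow> lt (g (?enc a)) (g (?enc b)))"
      using g ab Dg dec_enc by (auto simp: dc_emb_def dY_def ltY_def)
  qed
qed

section \<open>The groups Aut(Q>=0) and Aut(U)\<close>

lemma strict_mono_on_inv_into:
  fixes f :: "'a::linorder \<Rightarrow> 'b::linorder"
  assumes "strict_mono_on A f"
  shows "strict_mono_on (f ` A) (inv_into A f)"
proof (rule strict_mono_onI)
  fix x y assume "x \<in> f ` A" "y \<in> f ` A" "x < y"
  then obtain a b where "a \<in> A" "b \<in> A" "x = f a" "y = f b" "f a < f b" by auto
  with assms show "inv_into A f x < inv_into A f y"
    by (simp add: strict_mono_on_imp_inj_on strict_mono_on_less)
qed

lemma carrier_AutQ: "carrier AutQ = {h \<in> Bij Qnn. strict_mono_on Qnn h}"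
  by (auto simp: AutQ_def Bij_def)

lemma AutQ_eq_perm_monoid: "AutQ = perm_monoid Qnn (carrier AutQ)"
  by (simp add: AutQ_def perm_monoid_def)

lemma subgroup_AutQ: "subgroup (carrier AutQ) (BijGroup Qnn)"
proof (rule subgroup.intro)
  show "carrier AutQ \<subseteq> carrier (BijGroup Qnn)" by (auto simp: carrier_AutQ BijGroup_def)
next
  fix g h assume g: "g \<in> carrier AutQ" and h: "h \<in> carrier AutQ"
  have "strict_mono_on Qnn (compose Qnn g h)"
  proof (rule strict_mono_onI)
    fix x y assume "x \<in> Qnn" "y \<in> Qnn" "x < y"
    moreover have "h ` Qnn \<subseteq> Qnn" using h by (auto simp: carrier_AutQ dest: Bij_imp_funcset)
    ultimately have "h x < h y" "h x \<in> Qnn" "h y \<in> Qnn"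
      using h by (auto simp: carrier_AutQ strict_mono_onD)
    then show "compose Qnn g h x < compose Qnn g h y"
      using g \<open>x \<in> Qnn\<close> \<open>y \<in> Qnn\<close> strict_mono_onD[of Qnn g "h x" "h y"]
      by (simp add: carrier_AutQ compose_eq)
  qed
  then show "g \<otimes>\<^bsub>BijGroup Qnn\<^esub> h \<in> carrier AutQ"
    using g h by (simp add: carrier_AutQ mult_BijGroup compose_Bij)
next
  show "\<one>\<^bsub>BijGroup Qnn\<^esub> \<in> carrier AutQ"
    using id_Bij[of Qnn] by (auto simp: carrier_AutQ one_BijGroup id_def intro: strict_mono_onI)
next
  fix h assume h: "h \<in> carrier AutQ"
  then have "h ` Qnn = Qnn" "strict_mono_on Qnn h"
    by (auto simp: carrier_AutQ Bij_def bij_betw_def)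
  then have "strict_mono_on Qnn (restrict (inv_into Qnn h) Qnn)"
    using strict_mono_on_inv_into[of Qnn h] by (auto simp: monotone_on_def)
  then show "inv\<^bsub>BijGroup Qnn\<^esub> h \<in> carrier AutQ"
    using h restrict_inv_into_Bij[of h Qnn] by (simp add: carrier_AutQ inv_BijGroup)
qed

lemma group_AutQ: "group AutQ"
  by (subst AutQ_eq_perm_monoid) (rule group_perm_monoid[OF subgroup_AutQ])

lemma topological_group_AutQ: "topological_group AutQ AutQ_top"
  using topological_group_perm_monoid[OF subgroup_AutQ]
  by (simp add: AutQ_top_def flip: AutQ_eq_perm_monoid)

lemma topspace_AutQ_top: "topspace AutQ_top = carrier AutQ"
  using topological_group_AutQ by (simp add: topological_group_def)

lemma continuous_map_AutQ_top_pointwise: "continuous_map AutQ_top (pointwise_topology Qnn) (\<lambda>h. h)"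
  unfolding AutQ_top_def by (rule continuous_map_into_fulltopology[OF continuous_map_id, unfolded id_def])

lemma inv_AutQ: "h \<in> carrier AutQ \<Longrightarrow> inv\<^bsub>AutQ\<^esub> h = restrict (inv_into Qnn h) Qnn"
  by (subst AutQ_eq_perm_monoid) (rule inv_perm_monoid[OF subgroup_AutQ])

lemma AutQ_zero:
  assumes h: "h \<in> carrier AutQ"
  shows "h 0 = 0"
proof -
  have mono: "strict_mono_on Qnn h" and onto: "h ` Qnn = Qnn"
    using h by (auto simp: carrier_AutQ Bij_def bij_betw_def)
  then obtain x where x: "x \<in> Qnn" "h x = 0" by (metis imageE zero_Qnn)
  have "h 0 \<le> h x" using strict_mono_on_leD[OF mono zero_Qnn x(1)] x(1) by (simp add: Qnn_def)
  moreover have "h 0 \<in> Qnn" using onto by auto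
  ultimately show ?thesis using x(2) by (simp add: Qnn_def)
qed

lemma AutQ_pos: "h \<in> carrier AutQ \<Longrightarrow> 0 < r \<Longrightarrow> 0 < h r"
  using AutQ_zero[of h] strict_mono_onD[of Qnn h 0 r] by (auto simp: carrier_AutQ pos_Qnn)

lemma AutQ_inv_into_pos: "h \<in> carrier AutQ \<Longrightarrow> 0 < r \<Longrightarrow> 0 < inv_into Qnn h r"
  using AutQ_pos[of "inv\<^bsub>AutQ\<^esub> h" r] group.inv_closed[OF group_AutQ, of h]
  by (simp add: inv_AutQ pos_Qnn)

lemma AutQ_inv_into_eq_iff:
  "h \<in> carrier AutQ \<Longrightarrow> r \<in> Qnn \<Longrightarrow> s \<in> Qnn \<Longrightarrow> inv_into Qnn h r = s \<longleftrightarrow> h s = r"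
  by (simp add: Bij_inv_into_eq_iff carrier_AutQ)

lemma AutQ_f_inv_into:
  "h \<in> carrier AutQ \<Longrightarrow> r \<in> Qnn \<Longrightarrow> inv_into Qnn h r \<in> Qnn \<and> h (inv_into Qnn h r) = r"
  using Bij_inv_into_mem[of h Qnn r] AutQ_inv_into_eq_iff[of h r] by (auto simp: carrier_AutQ)

lemma AutU_carrier_iff:
  "(f, g) \<in> AutU_carrier X d lt \<longleftrightarrow> f \<in> Bij X \<and> g \<in> carrier AutQ \<and>
     (\<forall>x\<in>X. \<forall>y\<in>X. d (f x) (f y) = g (d x y)) \<and> (\<forall>x\<in>X. \<forall>y\<in>X. lt x y \<longrightarrow> lt (f x) (f y))"
  using AutQ_zero[of g] by (auto simp: AutU_carrier_def carrier_AutQ Bij_def)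

lemma AutU_eq: "AutU X d lt = (perm_monoid X (Bij X) \<times>\<times> AutQ)\<lparr>carrier := AutU_carrier X d lt\<rparr>"
  by (simp add: AutU_def DirProd_def perm_monoid_def AutQ_def case_prod_unfold)

lemma subgroup_Bij: "subgroup (Bij S) (BijGroup S)"
  using group.subgroup_self[OF group_BijGroup] by (simp add: BijGroup_def)

lemma AutU_carrier_inv:
  assumes dist: "\<forall>x\<in>X. \<forall>y\<in>X. d x y \<in> Qnn" and order: "strict_linear_on X lt"
    and fg: "(f, g) \<in> AutU_carrier X d lt"
  shows "(restrict (inv_into X f) X, restrict (inv_into Qnn g) Qnn) \<in> AutU_carrier X d lt"
proof -
  have f: "f \<in> Bij X" and g: "g \<in> carrier AutQ"
    and fd: "\<And>x y. x \<in> X \<Longrightarrow> y \<in> X \<Longrightarrow> d (f x) (f y) = g (d x y)"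
    and flt: "\<And>x y. x \<in> X \<Longrightarrow> y \<in> X \<Longrightarrow> lt x y \<Longrightarrow> lt (f x) (f y)"
    using fg by (auto simp: AutU_carrier_iff)
  have fX: "f ` X = X" and gQ: "g ` Qnn = Qnn" and g_inj: "inj_on g Qnn"
    using f g by (auto simp: Bij_def carrier_AutQ bij_betw_def)
  let ?f' = "restrict (inv_into X f) X" and ?g' = "restrict (inv_into Qnn g) Qnn"
  have f'X: "?f' x \<in> X" and ff': "f (?f' x) = x" if "x \<in> X" for x
    using that fX by (auto simp: inv_into_into f_inv_into_f)
  have "d (?f' x) (?f' y) = ?g' (d x y)" if "x \<in> X" "y \<in> X" for x y
  proof -
    have "d x y = g (d (?f' x) (?f' y))" using fd[OF f'X f'X] ff' that by simp
    moreover have "d (?f' x) (?f' y) \<in> Qnn" using dist f'X that by blast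
    ultimately show ?thesis using g_inj gQ by (auto simp: inv_into_f_f)
  qed
  moreover have "lt (?f' x) (?f' y)" if "x \<in> X" "y \<in> X" "lt x y" for x y
    by (rule strict_linear_on_reflect[OF order, of f])
      (use fX flt f'X that ff'[OF that(1)] ff'[OF that(2)] in auto)
  moreover have "?g' \<in> carrier AutQ"
    using group.inv_closed[OF group_AutQ g] by (simp add: inv_AutQ[OF g])
  ultimately show ?thesis using restrict_inv_into_Bij[OF f] by (simp add: AutU_carrier_iff)
qed

lemma AutU_carrier_compose:
  assumes dist: "\<forall>x\<in>X. \<forall>y\<in>X. d x y \<in> Qnn"
    and fg: "(f, g) \<in> AutU_carrier X d lt" and fg': "(f', g') \<in> AutU_carrier X d lt"
  shows "(compose X f f', compose Qnn g g') \<in> AutU_carrier X d lt"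
proof -
  have f: "f \<in> Bij X" "f' \<in> Bij X" and g: "g \<in> carrier AutQ" "g' \<in> carrier AutQ"
    using fg fg' by (auto simp: AutU_carrier_iff)
  have f'X: "f' x \<in> X" if "x \<in> X" for x using Bij_imp_funcset[OF f(2)] that by auto
  have "compose Qnn g g' \<in> carrier AutQ"
    using monoid.m_closed[OF group.is_monoid[OF group_AutQ] g] by (simp add: AutQ_def)
  moreover have "d (compose X f f' x) (compose X f f' y) = compose Qnn g g' (d x y)"
    if "x \<in> X" "y \<in> X" for x y
    using fg fg' that f'X dist by (simp add: AutU_carrier_iff compose_eq)
  moreover have "lt (compose X f f' x) (compose X f f' y)" if "x \<in> X" "y \<in> X" "lt x y" for x y
    using fg fg' that f'X by (simp add: AutU_carrier_iff compose_eq)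
  ultimately show ?thesis using compose_Bij[OF f] by (simp add: AutU_carrier_iff)
qed

lemma subgroup_AutU_carrier:
  assumes dist: "\<forall>x\<in>X. \<forall>y\<in>X. d x y \<in> Qnn" and order: "strict_linear_on X lt"
  shows "subgroup (AutU_carrier X d lt) (perm_monoid X (Bij X) \<times>\<times> AutQ)"
proof (rule group.subgroupI)
  show "group (perm_monoid X (Bij X) \<times>\<times> AutQ)"
    by (rule DirProd_group[OF group_perm_monoid[OF subgroup_Bij] group_AutQ])
  show "AutU_carrier X d lt \<subseteq> carrier (perm_monoid X (Bij X) \<times>\<times> AutQ)"
    by (auto simp: AutU_carrier_iff perm_monoid_def)
  have "(restrict id X, restrict id Qnn) \<in> AutU_carrier X d lt"
    using id_Bij[of X] subgroup.one_closed[OF subgroup_AutQ] dist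
    by (simp add: AutU_carrier_iff one_BijGroup id_def)
  then show "AutU_carrier X d lt \<noteq> {}" by blast
next
  fix p assume "p \<in> AutU_carrier X d lt"
  moreover obtain f g where fg: "p = (f, g)" by (cases p)
  ultimately have "f \<in> Bij X" "g \<in> carrier AutQ" by (auto simp: AutU_carrier_iff)
  then have "inv\<^bsub>perm_monoid X (Bij X) \<times>\<times> AutQ\<^esub> p = (restrict (inv_into X f) X, restrict (inv_into Qnn g) Qnn)"
    using inv_DirProd[OF group_perm_monoid[OF subgroup_Bij] group_AutQ, where g = f and h = g]
      inv_perm_monoid[OF subgroup_Bij] inv_AutQ
    by (simp add: fg perm_monoid_def)
  then show "inv\<^bsub>perm_monoid X (Bij X) \<times>\<times> AutQ\<^esub> p \<in> AutU_carrier X d lt"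
    using AutU_carrier_inv[OF dist order] \<open>p \<in> AutU_carrier X d lt\<close> fg by simp
next
  fix p q assume "p \<in> AutU_carrier X d lt" "q \<in> AutU_carrier X d lt"
  then show "p \<otimes>\<^bsub>perm_monoid X (Bij X) \<times>\<times> AutQ\<^esub> q \<in> AutU_carrier X d lt"
    using AutU_carrier_compose[OF dist] by (cases p, cases q) (simp add: perm_monoid_def AutQ_def)
qed

lemma AutU_carrier_subset: "AutU_carrier X d lt \<subseteq> Bij X \<times> carrier AutQ"
  by (auto simp: AutU_carrier_iff)

lemma topological_group_AutU:
  assumes "\<forall>x\<in>X. \<forall>y\<in>X. d x y \<in> Qnn" and "strict_linear_on X lt"
  shows "topological_group (AutU X d lt) (AutU_top X d lt)"
proof -
  have "topological_group (perm_monoid X (Bij X) \<times>\<times> AutQ)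
      (prod_topology (subtopology (pointwise_topology X) (Bij X)) AutQ_top)"
    by (rule topological_group_DirProd[OF topological_group_perm_monoid[OF subgroup_Bij] topological_group_AutQ])
  from topological_group_subgroup[OF this subgroup_AutU_carrier[OF assms]]
  show ?thesis
    using AutU_carrier_subset[of X d lt]
    by (simp add: AutU_eq AutU_top_def AutQ_top_def subtopology_subtopology Int_absorb1
        flip: subtopology_Times)
qed

lemma snd_hom_AutU: "snd \<in> hom (AutU X d lt) AutQ"
  unfolding hom_def by (auto simp: AutU_def AutQ_def AutU_carrier_iff)

lemma continuous_map_snd_AutU: "continuous_map (AutU_top X d lt) AutQ_top snd"
proof -
  have "continuous_map (AutU_top X d lt) (pointwise_topology Qnn) snd"
    unfolding AutU_top_def by (rule continuous_map_from_subtopology[OF continuous_map_snd])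
  moreover have "snd ` topspace (AutU_top X d lt) \<subseteq> carrier AutQ"
    by (auto simp: AutU_top_def AutU_carrier_iff)
  ultimately show ?thesis by (simp add: AutQ_top_def continuous_map_in_subtopology image_subset_iff_funcset)
qed

lemma IsoU_eq_kernel: "IsoU X d lt = (AutU X d lt)\<lparr>carrier := kernel (AutU X d lt) AutQ snd\<rparr>"
  by (simp add: IsoU_def kernel_def AutU_def AutQ_def)

lemma IsoU_top_eq_kernel: "IsoU_top X d lt = subtopology (AutU_top X d lt) (kernel (AutU X d lt) AutQ snd)"
  by (simp add: IsoU_top_def IsoU_eq_kernel)

section \<open>A concrete model: finitely supported functions\<close>

definition FS :: "(rat \<Rightarrow> rat) set" where
  "FS = {u. finite {r. u r \<noteq> 0} \<and> (\<forall>r. u r \<noteq> 0 \<longrightarrow> 0 < r)}"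

definition dist_FS :: "(rat \<Rightarrow> rat) \<Rightarrow> (rat \<Rightarrow> rat) \<Rightarrow> rat" where
  "dist_FS u v = (if u = v then 0 else Max {r. u r \<noteq> v r})"

definition less_FS :: "(rat \<Rightarrow> rat) \<Rightarrow> (rat \<Rightarrow> rat) \<Rightarrow> bool" where
  "less_FS u v \<longleftrightarrow> u \<noteq> v \<and> u (dist_FS u v) < v (dist_FS u v)"

lemma zero_FS: "(\<lambda>_. 0) \<in> FS"
  by (simp add: FS_def)

lemma finite_support_FS: "u \<in> FS \<Longrightarrow> finite {r. u r \<noteq> 0}"
  by (simp add: FS_def)

lemma support_pos_FS: "u \<in> FS \<Longrightarrow> u r \<noteq> 0 \<Longrightarrow> 0 < r"
  by (simp add: FS_def)

lemma finite_diff_FS: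
  assumes "u \<in> FS" "v \<in> FS" shows "finite {r. u r \<noteq> v r}"
proof (rule finite_subset)
  show "{r. u r \<noteq> v r} \<subseteq> {r. u r \<noteq> 0} \<union> {r. v r \<noteq> 0}" by auto
qed (use assms in \<open>simp add: finite_support_FS\<close>)

lemma dist_FS_self [simp]: "dist_FS u u = 0"
  by (simp add: dist_FS_def)

lemma dist_FS_commute: "dist_FS u v = dist_FS v u"
proof -
  have "{r. u r \<noteq> v r} = {r. v r \<noteq> u r}" by auto
  then show ?thesis by (simp add: dist_FS_def eq_commute)
qed

lemma dist_FS_diff:
  assumes "u \<in> FS" "v \<in> FS" "u \<noteq> v"
  shows "u (dist_FS u v) \<noteq> v (dist_FS u v)" "0 < dist_FS u v"
proof -
  have "{r. u r \<noteq> v r} \<noteq> {}" using assms(3) by auto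
  then have "dist_FS u v \<in> {r. u r \<noteq> v r}"
    using Max_in[OF finite_diff_FS[OF assms(1,2)]] assms(3) by (simp add: dist_FS_def)
  then show "u (dist_FS u v) \<noteq> v (dist_FS u v)" by simp
  then show "0 < dist_FS u v" using assms(1,2) support_pos_FS by (cases "u (dist_FS u v) = 0") auto
qed

lemma eq_above_dist_FS:
  assumes "u \<in> FS" "v \<in> FS" "dist_FS u v < s" shows "u s = v s"
proof (rule ccontr)
  assume "u s \<noteq> v s"
  then have "s \<le> dist_FS u v" using finite_diff_FS[OF assms(1,2)] by (auto simp: dist_FS_def)
  then show False using assms(3) by simp
qed

lemma dist_FS_nonneg: "u \<in> FS \<Longrightarrow> v \<in> FS \<Longrightarrow> 0 \<le> dist_FS u v"
  using dist_FS_diff(2)[of u v] by (cases "u = v") auto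

lemma dist_FS_eq_0_iff: "u \<in> FS \<Longrightarrow> v \<in> FS \<Longrightarrow> dist_FS u v = 0 \<longleftrightarrow> u = v"
  by (metis dist_FS_diff(2) dist_FS_self less_irrefl)

lemma dist_FS_eqI:
  assumes "u \<in> FS" "v \<in> FS" "u t \<noteq> v t" "\<And>s. t < s \<Longrightarrow> u s = v s"
  shows "dist_FS u v = t"
proof -
  have uv: "u \<noteq> v" using assms(3) by auto
  have "t \<le> dist_FS u v"
    using finite_diff_FS[OF assms(1,2)] assms(3) uv by (simp add: dist_FS_def)
  moreover have "\<not> t < dist_FS u v" using assms(4) dist_FS_diff(1)[OF assms(1,2) uv] by blast
  ultimately show ?thesis by simp
qed

lemma dist_FS_leI:
  assumes "u \<in> FS" "v \<in> FS" "0 \<le> t" "\<And>s. t < s \<Longrightarrow> u s = v s"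
  shows "dist_FS u v \<le> t"
proof (cases "u = v")
  case False
  then show ?thesis using dist_FS_diff(1)[OF assms(1,2) False] assms(4) by force
qed (use assms in simp)

lemma dist_FS_ultra:
  assumes "u \<in> FS" "v \<in> FS" "w \<in> FS"
  shows "dist_FS u w \<le> max (dist_FS u v) (dist_FS v w)"
  using dist_FS_nonneg[OF assms(1,2)] eq_above_dist_FS[OF assms(1,2)] eq_above_dist_FS[OF assms(2,3)]
  by (intro dist_FS_leI[OF assms(1,3)]) auto

lemma less_FS_irrefl: "\<not> less_FS u u"
  by (simp add: less_FS_def)

lemma less_FS_total: "u \<in> FS \<Longrightarrow> v \<in> FS \<Longrightarrow> u \<noteq> v \<Longrightarrow> less_FS u v \<or> less_FS v u"
  using dist_FS_diff(1)[of u v] by (auto simp: less_FS_def dist_FS_commute[of v u])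

lemma less_FS_at_dist:
  "u \<in> FS \<Longrightarrow> v \<in> FS \<Longrightarrow> dist_FS u v = t \<Longrightarrow> 0 < t \<Longrightarrow> less_FS u v \<longleftrightarrow> u t < v t"
  by (auto simp: less_FS_def)

lemma less_FS_trans:
  assumes u: "u \<in> FS" and v: "v \<in> FS" and w: "w \<in> FS" and "less_FS u v" "less_FS v w"
  shows "less_FS u w"
proof -
  define a b where "a = dist_FS u v" and "b = dist_FS v w"
  have uv: "u a < v a" and vw: "v b < w b" using assms(4,5) by (auto simp: less_FS_def a_def b_def)
  have above_a: "u s = v s" if "a < s" for s using eq_above_dist_FS[OF u v] that a_def by simp
  have above_b: "v s = w s" if "b < s" for s using eq_above_dist_FS[OF v w] that b_def by simp
  consider "a < b" | "b < a" | "a = b" by linarith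
  then show ?thesis
  proof cases
    case 1
    then have "dist_FS u w = b" using above_a above_b vw by (intro dist_FS_eqI[OF u w]) auto
    then show ?thesis using 1 above_a vw by (auto simp: less_FS_def)
  next
    case 2
    then have "dist_FS u w = a" using above_a above_b uv by (intro dist_FS_eqI[OF u w]) auto
    then show ?thesis using 2 above_b uv by (auto simp: less_FS_def)
  next
    case 3
    then have "dist_FS u w = a" using above_a above_b uv vw by (intro dist_FS_eqI[OF u w]) auto
    then show ?thesis using 3 uv vw by (auto simp: less_FS_def)
  qed
qed

lemma FS_not_between:
  assumes x: "x \<in> FS" and a: "a \<in> FS" and c: "c \<in> FS" and y: "y \<in> FS"
    and "dist_FS x a < dist_FS x y" "dist_FS x c < dist_FS x y"
  shows "\<not> (less_FS a y \<and> less_FS y c)"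
proof
  assume between: "less_FS a y \<and> less_FS y c"
  define t where "t = dist_FS x y"
  have "x \<noteq> y" using assms(5) dist_FS_nonneg[OF x a] by auto
  then have xy: "x t \<noteq> y t" using dist_FS_diff(1)[OF x y] t_def by simp
  have above: "x s = y s" if "t < s" for s using eq_above_dist_FS[OF x y] that t_def by simp
  have xa: "x s = a s" if "t \<le> s" for s using eq_above_dist_FS[OF x a] assms(5) that t_def by fastforce
  have xc: "x s = c s" if "t \<le> s" for s using eq_above_dist_FS[OF x c] assms(6) that t_def by fastforce
  have "dist_FS a y = t" using xy xa above by (intro dist_FS_eqI[OF a y]) auto
  moreover have "dist_FS y c = t" using xy xc above by (intro dist_FS_eqI[OF y c]) auto
  ultimately show False using between xa[of t] xc[of t] by (auto simp: less_FS_def)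
qed

lemma cous_FS: "cous FS dist_FS Qnn less_FS"
  unfolding cous_def
proof (intro conjI)
  show "ultrametric_on FS Qnn dist_FS"
    using dist_FS_nonneg dist_FS_eq_0_iff dist_FS_commute dist_FS_ultra
    by (auto simp: ultrametric_on_def Qnn_def)
  have balls: "convex_in FS less_FS {y \<in> FS. dist_FS x y \<le> r} \<and> convex_in FS less_FS {y \<in> FS. dist_FS x y < r}"
    if x: "x \<in> FS" for x r
    unfolding convex_in_def
  proof (intro conjI ballI impI)
    fix a c y assume "a \<in> {y \<in> FS. dist_FS x y \<le> r}" "c \<in> {y \<in> FS. dist_FS x y \<le> r}" "y \<in> FS"
      "less_FS a y \<and> less_FS y c"
    then show "y \<in> {y \<in> FS. dist_FS x y \<le> r}"
      using FS_not_between[OF x, of a c y] by force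
  next
    fix a c y assume "a \<in> {y \<in> FS. dist_FS x y < r}" "c \<in> {y \<in> FS. dist_FS x y < r}" "y \<in> FS"
      "less_FS a y \<and> less_FS y c"
    then show "y \<in> {y \<in> FS. dist_FS x y < r}"
      using FS_not_between[OF x, of a c y] by force
  qed
  have "strict_linear_on FS less_FS"
    unfolding strict_linear_on_def
    using less_FS_irrefl less_FS_trans less_FS_total by blast
  then show "convex_order FS dist_FS less_FS"
    unfolding convex_order_def using balls by blast
qed (auto simp: Qnn_def)

lemma countable_FS: "countable FS"
proof (rule countable_image_inj_on)
  let ?graph = "\<lambda>u::rat \<Rightarrow> rat. (\<lambda>r. (r, u r)) ` {r. u r \<noteq> 0}"
  show "countable (?graph ` FS)"
    by (rule countable_subset[OF _ countable_Collect_finite]) (auto simp: FS_def)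
  show "inj_on ?graph FS"
  proof (rule inj_onI, rule ext)
    fix u v r assume graph: "?graph u = ?graph v"
    show "u r = v r"
    proof (cases "u r = 0")
      case True
      show ?thesis
      proof (rule ccontr)
        assume "u r \<noteq> v r"
        then have "(r, v r) \<in> ?graph v" using True by auto
        then show False using graph True by auto
      qed
    next
      case False
      then have "(r, u r) \<in> ?graph v" using graph by (metis (mono_tags, lifting) image_eqI mem_Collect_eq)
      then show ?thesis by auto
    qed
  qed
qed

definition graft :: "(rat \<Rightarrow> rat) \<Rightarrow> rat \<Rightarrow> rat \<Rightarrow> rat \<Rightarrow> rat" where
  "graft u r v = (\<lambda>s. if r < s then u s else if s = r then v else 0)"

lemma graft_FS:
  assumes "u \<in> FS" "0 < r" shows "graft u r v \<in> FS"
proof -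
  have "{s. graft u r v s \<noteq> 0} \<subseteq> {s. u s \<noteq> 0} \<union> {r}" by (auto simp: graft_def)
  then have "finite {s. graft u r v s \<noteq> 0}" using finite_support_FS[OF assms(1)] finite_subset by auto
  moreover have "0 < s" if "graft u r v s \<noteq> 0" for s
    using that assms support_pos_FS[OF assms(1)] by (auto simp: graft_def split: if_splits)
  ultimately show ?thesis by (simp add: FS_def)
qed

lemma dist_graft_far:
  assumes u: "u \<in> FS" and a: "a \<in> FS" and r: "0 < r" "r < dist_FS u a"
  shows "dist_FS (graft u r v) a = dist_FS u a"
    "less_FS (graft u r v) a \<longleftrightarrow> less_FS u a" "less_FS a (graft u r v) \<longleftrightarrow> less_FS a u"
proof -
  let ?t = "dist_FS u a"
  have g: "graft u r v \<in> FS" by (rule graft_FS[OF u r(1)])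
  have "u \<noteq> a" using r by auto
  then have "u ?t \<noteq> a ?t" by (rule dist_FS_diff(1)[OF u a])
  then show dist: "dist_FS (graft u r v) a = ?t"
    using r eq_above_dist_FS[OF u a] by (intro dist_FS_eqI[OF g a]) (auto simp: graft_def)
  have t: "0 < ?t" and gt: "graft u r v ?t = u ?t" using r by (auto simp: graft_def)
  show "less_FS (graft u r v) a \<longleftrightarrow> less_FS u a"
    using less_FS_at_dist[OF g a dist t] less_FS_at_dist[OF u a refl t] gt by simp
  show "less_FS a (graft u r v) \<longleftrightarrow> less_FS a u"
    using less_FS_at_dist[OF a g _ t] less_FS_at_dist[OF a u _ t] dist gt
    by (simp add: dist_FS_commute[of a])
qed

lemma dist_graft_near:
  assumes u: "u \<in> FS" and a: "a \<in> FS" and r: "0 < r" "dist_FS u a \<le> r" and v: "v \<noteq> a r"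
  shows "dist_FS (graft u r v) a = r"
    "less_FS (graft u r v) a \<longleftrightarrow> v < a r" "less_FS a (graft u r v) \<longleftrightarrow> a r < v"
proof -
  have g: "graft u r v \<in> FS" by (rule graft_FS[OF u r(1)])
  show dist: "dist_FS (graft u r v) a = r"
    using r v eq_above_dist_FS[OF u a] by (intro dist_FS_eqI[OF g a]) (auto simp: graft_def)
  show "less_FS (graft u r v) a \<longleftrightarrow> v < a r"
    using less_FS_at_dist[OF g a dist r(1)] by (simp add: graft_def)
  show "less_FS a (graft u r v) \<longleftrightarrow> a r < v"
    using less_FS_at_dist[OF a g _ r(1)] dist by (simp add: graft_def dist_FS_commute[of a])
qed

definition act_FS :: "(rat \<Rightarrow> rat) \<Rightarrow> (rat \<Rightarrow> rat) \<Rightarrow> rat \<Rightarrow> rat" where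
  "act_FS h u = (\<lambda>r. if 0 < r then u (inv_into Qnn h r) else 0)"

lemma act_FS_apply:
  assumes h: "h \<in> carrier AutQ" and s: "0 < s"
  shows "act_FS h u (h s) = u s"
  using AutQ_pos[OF h s] AutQ_inv_into_eq_iff[OF h pos_Qnn pos_Qnn, OF AutQ_pos[OF h s] s]
  by (simp add: act_FS_def)

lemma act_FS_closed:
  assumes h: "h \<in> carrier AutQ" and u: "u \<in> FS"
  shows "act_FS h u \<in> FS"
proof -
  have "{r. act_FS h u r \<noteq> 0} \<subseteq> h ` {s. u s \<noteq> 0}"
  proof
    fix r assume "r \<in> {r. act_FS h u r \<noteq> 0}"
    then have r: "0 < r" "u (inv_into Qnn h r) \<noteq> 0" by (auto simp: act_FS_def split: if_splits)
    then show "r \<in> h ` {s. u s \<noteq> 0}"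
      using AutQ_f_inv_into[OF h pos_Qnn[OF r(1)]] by (metis (mono_tags, lifting) image_eqI mem_Collect_eq)
  qed
  then have "finite {r. act_FS h u r \<noteq> 0}"
    using finite_support_FS[OF u] finite_subset by blast
  then show ?thesis by (simp add: FS_def act_FS_def)
qed

lemma act_FS_compose:
  assumes g: "g \<in> carrier AutQ" and h: "h \<in> carrier AutQ"
  shows "act_FS g (act_FS h u) = act_FS (g \<otimes>\<^bsub>AutQ\<^esub> h) u"
proof
  fix r show "act_FS g (act_FS h u) r = act_FS (g \<otimes>\<^bsub>AutQ\<^esub> h) u r"
  proof (cases "0 < r")
    case True
    let ?s = "inv_into Qnn h (inv_into Qnn g r)"
    have gr: "inv_into Qnn g r \<in> Qnn" "g (inv_into Qnn g r) = r"
      using AutQ_f_inv_into[OF g pos_Qnn[OF True]] by auto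
    have hs: "?s \<in> Qnn" "h ?s = inv_into Qnn g r" using AutQ_f_inv_into[OF h gr(1)] by auto
    have gh: "g \<otimes>\<^bsub>AutQ\<^esub> h \<in> carrier AutQ" by (rule monoid.m_closed[OF group.is_monoid[OF group_AutQ] g h])
    have "(g \<otimes>\<^bsub>AutQ\<^esub> h) ?s = r" using gr hs by (simp add: AutQ_def compose_eq)
    then have "inv_into Qnn (g \<otimes>\<^bsub>AutQ\<^esub> h) r = ?s"
      using AutQ_inv_into_eq_iff[OF gh pos_Qnn[OF True] hs(1)] by simp
    then show ?thesis using True AutQ_inv_into_pos[OF g True] by (simp add: act_FS_def)
  qed (simp add: act_FS_def)
qed

lemma act_FS_one:
  assumes u: "u \<in> FS" shows "act_FS \<one>\<^bsub>AutQ\<^esub> u = u"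
proof
  fix r show "act_FS \<one>\<^bsub>AutQ\<^esub> u r = u r"
  proof (cases "0 < r")
    case True
    have "inv_into Qnn \<one>\<^bsub>AutQ\<^esub> r = r"
      using AutQ_inv_into_eq_iff[OF monoid.one_closed[OF group.is_monoid[OF group_AutQ]] pos_Qnn pos_Qnn, OF True True]
        pos_Qnn[OF True]
      by (simp add: AutQ_def)
    then show ?thesis using True by (simp add: act_FS_def)
  qed (use support_pos_FS[OF u] in \<open>force simp: act_FS_def\<close>)
qed

lemma dist_FS_act:
  assumes h: "h \<in> carrier AutQ" and u: "u \<in> FS" and v: "v \<in> FS"
  shows "dist_FS (act_FS h u) (act_FS h v) = h (dist_FS u v)"
proof (cases "u = v")
  case False
  let ?t = "dist_FS u v"
  have t: "0 < ?t" "u ?t \<noteq> v ?t" using dist_FS_diff[OF u v False] by auto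
  show ?thesis
  proof (rule dist_FS_eqI[OF act_FS_closed[OF h u] act_FS_closed[OF h v]])
    show "act_FS h u (h ?t) \<noteq> act_FS h v (h ?t)" using t by (simp add: act_FS_apply[OF h])
    fix s assume s: "h ?t < s"
    then have "0 < s" using AutQ_pos[OF h t(1)] by simp
    then obtain s' where s': "0 < s'" "s = h s'"
      using AutQ_f_inv_into[OF h pos_Qnn] AutQ_inv_into_pos[OF h] by metis
    then have "?t < s'"
      using s t(1) strict_mono_on_less[of Qnn h ?t s'] h by (auto simp: carrier_AutQ pos_Qnn)
    then show "act_FS h u s = act_FS h v s"
      using s' eq_above_dist_FS[OF u v] by (simp add: act_FS_apply[OF h])
  qed
qed (simp add: AutQ_zero[OF h])

lemma less_FS_act:
  assumes h: "h \<in> carrier AutQ" and u: "u \<in> FS" and v: "v \<in> FS" and less: "less_FS u v"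
  shows "less_FS (act_FS h u) (act_FS h v)"
proof -
  let ?t = "dist_FS u v"
  have t: "0 < ?t" "u ?t < v ?t" using less dist_FS_diff(2)[OF u v] by (auto simp: less_FS_def)
  have "0 < h ?t" by (rule AutQ_pos[OF h t(1)])
  then show ?thesis
    using t by (simp add: less_FS_at_dist[OF act_FS_closed[OF h u] act_FS_closed[OF h v]
        dist_FS_act[OF h u v]] act_FS_apply[OF h])
qed

lemma act_FS_cong:
  assumes h: "h \<in> carrier AutQ" and h': "h' \<in> carrier AutQ"
    and agree: "\<And>c. u c \<noteq> 0 \<Longrightarrow> h c = h' c"
  shows "act_FS h u = act_FS h' u"
proof
  fix r show "act_FS h u r = act_FS h' u r"
  proof (cases "0 < r")
    case True
    let ?s = "inv_into Qnn h r" and ?s' = "inv_into Qnn h' r"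
    have s: "?s \<in> Qnn" "h ?s = r" and s': "?s' \<in> Qnn" "h' ?s' = r"
      using AutQ_f_inv_into[OF h pos_Qnn[OF True]] AutQ_f_inv_into[OF h' pos_Qnn[OF True]] by auto
    have "u ?s = u ?s'"
    proof (cases "u ?s = 0")
      case False
      then have "h' ?s = r" using agree s by simp
      then show ?thesis using AutQ_inv_into_eq_iff[OF h' pos_Qnn[OF True] s(1)] by simp
    next
      case True
      show ?thesis
      proof (rule ccontr)
        assume "u ?s \<noteq> u ?s'"
        then have "h ?s' = r" using agree s' True by simp
        then show False using AutQ_inv_into_eq_iff[OF h pos_Qnn[OF \<open>0 < r\<close>] s'(1)] \<open>u ?s \<noteq> u ?s'\<close> by simp
      qed
    qed
    then show ?thesis using True by (simp add: act_FS_def)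
  qed (simp add: act_FS_def)
qed

lemma bij_betw_act_FS:
  assumes h: "h \<in> carrier AutQ" shows "bij_betw (act_FS h) FS FS"
proof (rule bij_betw_byWitness[where f' = "act_FS (inv\<^bsub>AutQ\<^esub> h)"])
  have h': "inv\<^bsub>AutQ\<^esub> h \<in> carrier AutQ" by (rule group.inv_closed[OF group_AutQ h])
  show "\<forall>u\<in>FS. act_FS (inv\<^bsub>AutQ\<^esub> h) (act_FS h u) = u"
    using act_FS_compose[OF h' h] act_FS_one group.l_inv[OF group_AutQ h] by simp
  show "\<forall>u\<in>FS. act_FS h (act_FS (inv\<^bsub>AutQ\<^esub> h) u) = u"
    using act_FS_compose[OF h h'] act_FS_one group.r_inv[OF group_AutQ h] by simp
  show "act_FS h ` FS \<subseteq> FS" "act_FS (inv\<^bsub>AutQ\<^esub> h) ` FS \<subseteq> FS"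
    using act_FS_closed h h' by auto
qed

lemma openin_act_FS:
  assumes u: "u \<in> FS"
  shows "openin AutQ_top {h \<in> topspace AutQ_top. F (act_FS h u) = b}"
    (is "openin AutQ_top ?W")
proof (rule openin_subopen[THEN iffD2], intro ballI)
  note top = topspace_AutQ_top
  fix h0 assume h0: "h0 \<in> ?W"
  let ?N = "{h \<in> topspace AutQ_top. \<forall>c\<in>{c. u c \<noteq> 0}. h c = h0 c}"
  have "{c. u c \<noteq> 0} \<subseteq> Qnn" using support_pos_FS[OF u] by (auto simp: Qnn_def less_imp_le)
  then have "openin AutQ_top ?N"
    using openin_pointwise_agree[OF continuous_map_AutQ_top_pointwise finite_support_FS[OF u]] by blast
  moreover have "?N \<subseteq> ?W"
  proof
    fix h assume "h \<in> ?N"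
    then have h: "h \<in> carrier AutQ" and agree: "\<And>c. u c \<noteq> 0 \<Longrightarrow> h c = h0 c" using top by auto
    have "h0 \<in> carrier AutQ" using h0 top by auto
    from h this agree have "act_FS h u = act_FS h0 u" by (rule act_FS_cong)
    then show "h \<in> ?W" using h0 \<open>h \<in> ?N\<close> by simp
  qed
  ultimately show "\<exists>T. openin AutQ_top T \<and> h0 \<in> T \<and> T \<subseteq> ?W" using h0 by blast
qed

section \<open>Back and forth\<close>

lemma back_and_forth_step:
  assumes "P R"
    and extend_domain: "\<And>R a. P R \<Longrightarrow> a \<in> A \<Longrightarrow> \<exists>b. P (insert (a, b) R)"
    and extend_range: "\<And>R b. P R \<Longrightarrow> b \<in> B \<Longrightarrow> \<exists>a. P (insert (a, b) R)"
  shows "\<exists>R'. P R' \<and> R \<subseteq> R' \<and> (a \<in> A \<longrightarrow> a \<in> Domain R') \<and> (b \<in> B \<longrightarrow> b \<in> Range R')"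
proof -
  obtain R1 where R1: "P R1" "R \<subseteq> R1" "a \<in> A \<longrightarrow> a \<in> Domain R1"
    using extend_domain[OF \<open>P R\<close>, of a] \<open>P R\<close> by (cases "a \<in> A") blast+
  obtain R2 where "P R2" "R1 \<subseteq> R2" "b \<in> B \<longrightarrow> b \<in> Range R2"
    using extend_range[OF \<open>P R1\<close>, of b] \<open>P R1\<close> by (cases "b \<in> B") blast+
  with R1 show ?thesis by blast
qed

lemma back_and_forth:
  fixes P :: "('a \<times> 'b) set \<Rightarrow> bool"
  assumes A: "countable A" and B: "countable B" and empty: "P {}"
    and extend_domain: "\<And>R a. P R \<Longrightarrow> a \<in> A \<Longrightarrow> \<exists>b. P (insert (a, b) R)"
    and extend_range: "\<And>R b. P R \<Longrightarrow> b \<in> B \<Longrightarrow> \<exists>a. P (insert (a, b) R)"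
  obtains R where "A \<subseteq> Domain R" "B \<subseteq> Range R"
    "\<And>p q. p \<in> R \<Longrightarrow> q \<in> R \<Longrightarrow> \<exists>R'. P R' \<and> p \<in> R' \<and> q \<in> R'"
proof -
  have "\<exists>R'. P R' \<and> R \<subseteq> R' \<and> (a \<in> A \<longrightarrow> a \<in> Domain R') \<and> (b \<in> B \<longrightarrow> b \<in> Range R')"
    if "P R" for R a b
    by (rule back_and_forth_step[where P = P and A = A and B = B, OF that extend_domain extend_range])
  then obtain step where step: "\<And>R a b. P R \<Longrightarrow> P (step R a b) \<and> R \<subseteq> step R a b \<and>
      (a \<in> A \<longrightarrow> a \<in> Domain (step R a b)) \<and> (b \<in> B \<longrightarrow> b \<in> Range (step R a b))"
    by metis
  define chain where "chain = rec_nat {} (\<lambda>n R. step R (from_nat_into A n) (from_nat_into B n))"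
  have chain_Suc: "chain (Suc n) = step (chain n) (from_nat_into A n) (from_nat_into B n)" for n
    by (simp add: chain_def)
  have P_chain: "P (chain n)" for n
    by (induction n) (simp_all add: chain_def empty step)
  have chain_mono: "chain n \<subseteq> chain k" if "n \<le> k" for n k
    using lift_Suc_mono_le[of chain, OF _ that] step[OF P_chain] chain_Suc by blast
  show ?thesis
  proof
    show "A \<subseteq> Domain (\<Union>n. chain n)"
    proof
      fix a assume "a \<in> A"
      then have "a \<in> Domain (chain (Suc (to_nat_on A a)))"
        using step[OF P_chain] chain_Suc A by simp
      then show "a \<in> Domain (\<Union>n. chain n)" by blast
    qed
    show "B \<subseteq> Range (\<Union>n. chain n)"
    proof
      fix b assume "b \<in> B"
      then have "b \<in> Range (chain (Suc (to_nat_on B b)))"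
        using step[OF P_chain] chain_Suc B by simp
      then show "b \<in> Range (\<Union>n. chain n)" by blast
    qed
    fix p q assume "p \<in> (\<Union>n. chain n)" "q \<in> (\<Union>n. chain n)"
    then obtain n k where "p \<in> chain n" "q \<in> chain k" by blast
    then have "p \<in> chain (max n k)" "q \<in> chain (max n k)"
      using chain_mono[of n "max n k"] chain_mono[of k "max n k"] by auto
    then show "\<exists>R'. P R' \<and> p \<in> R' \<and> q \<in> R'" using P_chain by blast
  qed
qed

locale fraisse_U =
  fixes X :: "'a set" and d :: "'a \<Rightarrow> 'a \<Rightarrow> rat" and lt :: "'a \<Rightarrow> 'a \<Rightarrow> bool"
  assumes fraisse_limit: "fraisse_limit_U X d lt"
begin

lemma cous_X: "cous X d Qnn lt"
  using fraisse_limit by (simp add: fraisse_limit_U_def)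

lemma ultrametric_X: "ultrametric_on X Qnn d"
  by (rule cous_ultrametric_on[OF cous_X])

lemma strict_linear_X: "strict_linear_on X lt"
  by (rule cous_strict_linear_on[OF cous_X])

lemma dist_Qnn: "\<forall>x\<in>X. \<forall>y\<in>X. d x y \<in> Qnn"
  using ultrametric_on_in[OF ultrametric_X] by blast

lemma countable_X: "countable X"
  using fraisse_limit by (simp add: fraisse_limit_U_def)

definition partial_iso :: "((rat \<Rightarrow> rat) \<times> 'a) set \<Rightarrow> bool" where
  "partial_iso R \<longleftrightarrow> finite R \<and> R \<subseteq> FS \<times> X \<and>
     (\<forall>a x b y. (a, x) \<in> R \<longrightarrow> (b, y) \<in> R \<longrightarrow> dist_FS a b = d x y \<and> (less_FS a b \<longrightarrow> lt x y))"

lemma partial_iso_empty: "partial_iso {}"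
  by (simp add: partial_iso_def)

lemma partial_isoD:
  assumes "partial_iso R" "(a, x) \<in> R"
  shows "a \<in> FS" "x \<in> X" "(b, y) \<in> R \<Longrightarrow> dist_FS a b = d x y" "(b, y) \<in> R \<Longrightarrow> less_FS a b \<Longrightarrow> lt x y"
  using assms by (auto simp: partial_iso_def)

lemma partial_iso_functional:
  assumes "partial_iso R" "(a, x) \<in> R" "(a, y) \<in> R"
  shows "x = y"
  using partial_isoD[OF assms(1,2)] partial_isoD(2)[OF assms(1,3)] partial_isoD(3)[OF assms(1,2) assms(3)]
    ultrametric_on_eq_0_iff[OF ultrametric_X] by simp

lemma partial_iso_insert:
  assumes R: "partial_iso R" and m: "m \<in> FS" and x: "x \<in> X"
    and new: "\<And>a y. (a, y) \<in> R \<Longrightarrow>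
      dist_FS m a = d x y \<and> (less_FS m a \<longrightarrow> lt x y) \<and> (less_FS a m \<longrightarrow> lt y x)"
  shows "partial_iso (insert (m, x) R)"
  unfolding partial_iso_def
proof (intro conjI allI impI)
  show "finite (insert (m, x) R)" "insert (m, x) R \<subseteq> FS \<times> X"
    using R m x by (auto simp: partial_iso_def)
  fix a y b z assume ay: "(a, y) \<in> insert (m, x) R" and bz: "(b, z) \<in> insert (m, x) R"
  consider "(a, y) = (m, x)" "(b, z) = (m, x)" | "(a, y) = (m, x)" "(b, z) \<in> R"
    | "(a, y) \<in> R" "(b, z) = (m, x)" | "(a, y) \<in> R" "(b, z) \<in> R"
    using ay bz by blast
  then have "dist_FS a b = d y z \<and> (less_FS a b \<longrightarrow> lt y z)"
  proof cases
    case 1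
    then show ?thesis using ultrametric_on_eq_0_iff[OF ultrametric_X x x] less_FS_irrefl by auto
  next
    case 2
    then show ?thesis using new[of b z] by auto
  next
    case 3
    then show ?thesis
      using new[of a y] partial_isoD(2)[OF R] ultrametric_on_commute[OF ultrametric_X x]
      by (auto simp: dist_FS_commute)
  next
    case 4
    then show ?thesis using partial_isoD[OF R] by auto
  qed
  then show "dist_FS a b = d y z" "less_FS a b \<Longrightarrow> lt y z" by auto
qed

lemma forth_extend:
  assumes R: "partial_iso R" and m: "m \<in> FS"
  shows "\<exists>x. partial_iso (insert (m, x) R)"
proof -
  define f where "f a = (THE y. (a, y) \<in> R)" for a
  have f: "f a = y" if "(a, y) \<in> R" for a y
    unfolding f_def using that partial_iso_functional[OF R] by blast
  have B: "finite (insert m (Domain R))" "insert m (Domain R) \<subseteq> FS"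
    using R m by (auto simp: partial_iso_def finite_Domain)
  have fX: "f a \<in> X" if "a \<in> Domain R" for a using that f partial_isoD(2)[OF R] by blast
  have iso: "d (f a) (f b) = dist_FS a b \<and> (less_FS a b \<longrightarrow> lt (f a) (f b))"
    if "a \<in> Domain R" "b \<in> Domain R" for a b
    using that f partial_isoD(3,4)[OF R] by (metis DomainE)
  have ext: "extension_property X d lt" using fraisse_limit by (simp add: fraisse_limit_U_def)
  obtain g where gX: "\<And>b. b \<in> insert m (Domain R) \<Longrightarrow> g b \<in> X"
    and gf: "\<And>a. a \<in> Domain R \<Longrightarrow> g a = f a"
    and giso: "\<And>a b. a \<in> insert m (Domain R) \<Longrightarrow> b \<in> insert m (Domain R) \<Longrightarrow>
      d (g a) (g b) = dist_FS a b \<and> (less_FS a b \<longrightarrow> lt (g a) (g b))"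
    using extension_property_finite[OF ext cous_X cous_FS B subset_insertI fX iso] by blast
  have "partial_iso (insert (m, g m) R)"
  proof (rule partial_iso_insert[OF R m gX[OF insertI1]])
    fix a y assume "(a, y) \<in> R"
    then have "a \<in> Domain R" "g a = y" using gf f by auto
    then show "dist_FS m a = d (g m) y \<and> (less_FS m a \<longrightarrow> lt (g m) y) \<and> (less_FS a m \<longrightarrow> lt y (g m))"
      using giso[of m a] giso[of a m] by auto
  qed
  then show ?thesis by blast
qed

lemma back_separation:
  assumes R: "partial_iso R" and x: "x \<in> X" and r: "0 < r"
    and ay: "(a, y) \<in> R" "d x y = r" "lt y x" and ay': "(a', y') \<in> R" "d x y' = r" "lt x y'"
  shows "a r < a' r"
proof -
  have y: "y \<in> X" "a \<in> FS" and y': "y' \<in> X" "a' \<in> FS" using partial_isoD[OF R] ay ay' by auto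
  have yy': "lt y y'" by (rule strict_linear_on_trans[OF strict_linear_X y(1) x y'(1) ay(3) ay'(3)])
  have "d y y' \<le> r"
    using ultrametric_on_ultra[OF ultrametric_X y(1) x y'(1)] ultrametric_on_commute[OF ultrametric_X x y(1)] ay ay'
    by simp
  moreover have "\<not> d y y' < r"
  proof
    assume "d y y' < r"
    moreover have "d y y < r" using r ultrametric_on_eq_0_iff[OF ultrametric_X y(1) y(1)] by simp
    ultimately have "d y x < r" using cous_open_ball[OF cous_X y(1) y(1) y'(1) x] ay(3) ay'(3) by blast
    then show False using ay(2) ultrametric_on_commute[OF ultrametric_X x y(1)] by simp
  qed
  ultimately have dist: "dist_FS a a' = r" using partial_isoD(3)[OF R ay(1) ay'(1)] by simp
  have "a \<noteq> a'" using dist r by auto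
  moreover have "\<not> less_FS a' a"
    using partial_isoD(4)[OF R ay'(1) ay(1)] strict_linear_on_asym[OF strict_linear_X y(1) y'(1) yy'] by blast
  ultimately have "less_FS a a'" using less_FS_total[OF y(2) y'(2)] by blast
  then show ?thesis using less_FS_at_dist[OF y(2) y'(2) dist r] by simp
qed

lemma back_witness:
  assumes R: "partial_iso R" and x: "x \<in> X" and a0y0: "(a0, y0) \<in> R" and r: "d x y0 = r" "0 < r"
    and nearest: "\<And>a y. (a, y) \<in> R \<Longrightarrow> r \<le> d x y"
    and below: "\<And>a y. (a, y) \<in> R \<Longrightarrow> d x y = r \<Longrightarrow> lt y x \<Longrightarrow> a r < v"
    and above: "\<And>a y. (a, y) \<in> R \<Longrightarrow> d x y = r \<Longrightarrow> lt x y \<Longrightarrow> v < a r"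
    and ay: "(a, y) \<in> R"
  shows "dist_FS (graft a0 r v) a = d x y \<and> (less_FS (graft a0 r v) a \<longrightarrow> lt x y) \<and>
    (less_FS a (graft a0 r v) \<longrightarrow> lt y x)"
proof -
  have a0: "a0 \<in> FS" "y0 \<in> X" and a: "a \<in> FS" "y \<in> X" using partial_isoD[OF R] a0y0 ay by auto
  have iso0: "dist_FS a0 a = d y0 y" "less_FS a0 a \<Longrightarrow> lt y0 y" "less_FS a a0 \<Longrightarrow> lt y y0"
    using partial_isoD[OF R] a0y0 ay by auto
  have xy: "d x y = max r (d y0 y)"
    using ultrametric_on_nearest[OF ultrametric_X x a0(2) a(2)] nearest[OF ay] r by simp
  consider "r < d x y" | "d x y = r" using nearest[OF ay] by linarith
  then show ?thesis
  proof cases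
    case 1
    then have far: "r < dist_FS a0 a" "d x y = d y0 y" using xy iso0(1) by auto
    have "d y0 x \<le> r" using r(1) ultrametric_on_commute[OF ultrametric_X x a0(2)] by simp
    moreover have "\<not> d y0 y \<le> r" using far 1 by simp
    ultimately have side: "lt y0 y \<longleftrightarrow> lt x y" "lt y y0 \<longleftrightarrow> lt y x"
      by (rule cous_outside_ball[OF cous_X a0(2) x a(2)])+
    show ?thesis
      using dist_graft_far[OF a0(1) a(1) r(2) far(1)] far(2) iso0 side by auto
  next
    case 2
    then have "dist_FS a0 a \<le> r" using xy iso0(1) by simp
    have "x \<noteq> y" using 2 r ultrametric_on_eq_0_iff[OF ultrametric_X x a(2)] by auto
    then have "lt x y \<or> lt y x" by (rule strict_linear_on_total[OF strict_linear_X x a(2)])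
    then have v: "v \<noteq> a r" using below[OF ay 2] above[OF ay 2] by auto
    show ?thesis
      using dist_graft_near[OF a0(1) a(1) r(2) \<open>dist_FS a0 a \<le> r\<close> v] 2 below[OF ay 2] above[OF ay 2]
        \<open>lt x y \<or> lt y x\<close> by auto
  qed
qed

lemma nearest_point:
  assumes R: "partial_iso R" "R \<noteq> {}" and x: "x \<in> X" "x \<notin> Range R"
  obtains a0 y0 where "(a0, y0) \<in> R" "0 < d x y0" "\<And>a y. (a, y) \<in> R \<Longrightarrow> d x y0 \<le> d x y"
proof -
  have finR: "finite R" using R by (simp add: partial_iso_def)
  obtain a0 y0 where a0y0: "(a0, y0) \<in> R" and min: "\<And>a y. (a, y) \<in> R \<Longrightarrow> d x y0 \<le> d x y"
    using arg_min_if_finite(1)[OF finR R(2), of "\<lambda>p. d x (snd p)"]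
      arg_min_least[OF finR R(2), of _ "\<lambda>p. d x (snd p)"]
    by (metis prod.collapse snd_conv)
  have y0: "y0 \<in> X" using partial_isoD(2)[OF R(1) a0y0] .
  have "x \<noteq> y0" using x(2) a0y0 by auto
  then have "0 < d x y0"
    using ultrametric_on_eq_0_iff[OF ultrametric_X x(1) y0] ultrametric_on_nonneg[OF ultrametric_X _ x(1) y0]
    by force
  with a0y0 min show ?thesis using that by blast
qed

lemma back_extend:
  assumes R: "partial_iso R" and x: "x \<in> X"
  shows "\<exists>m. partial_iso (insert (m, x) R)"
proof (cases "x \<in> Range R \<or> R = {}")
  case True
  then show ?thesis
  proof
    assume "x \<in> Range R"
    then obtain a where "insert (a, x) R = R" by blast
    then show ?thesis using R by metis
  next
    assume "R = {}"
    then have "partial_iso (insert ((\<lambda>_. 0), x) R)"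
      by (intro partial_iso_insert[OF R zero_FS x]) auto
    then show ?thesis by blast
  qed
next
  case False
  then have finR: "finite R" using R by (simp add: partial_iso_def)
  obtain a0 y0 where a0y0: "(a0, y0) \<in> R" and pos: "0 < d x y0"
    and min: "\<And>a y. (a, y) \<in> R \<Longrightarrow> d x y0 \<le> d x y"
    using nearest_point[OF R _ x] False by blast
  define r where "r = d x y0"
  have r: "0 < r" using pos by (simp add: r_def)
  define L where "L = (\<lambda>(a, y). a r) ` {(a, y) \<in> R. d x y = r \<and> lt y x}"
  define U where "U = (\<lambda>(a, y). a r) ` {(a, y) \<in> R. d x y = r \<and> lt x y}"
  have "finite L" unfolding L_def by (rule finite_imageI, rule finite_subset[OF _ finR]) auto
  moreover have "finite U" unfolding U_def by (rule finite_imageI, rule finite_subset[OF _ finR]) auto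
  moreover have "\<forall>l\<in>L. \<forall>u\<in>U. l < u"
    using back_separation[OF R x r] by (auto simp: L_def U_def)
  ultimately obtain v where below: "\<forall>l\<in>L. l < v" and above: "\<forall>u\<in>U. v < u"
    using dense_separation[of L U] by blast
  have "partial_iso (insert (graft a0 r v, x) R)"
  proof (rule partial_iso_insert[OF R graft_FS[OF partial_isoD(1)[OF R a0y0] r] x])
    fix a y assume ay: "(a, y) \<in> R"
    show "dist_FS (graft a0 r v) a = d x y \<and> (less_FS (graft a0 r v) a \<longrightarrow> lt x y) \<and>
        (less_FS a (graft a0 r v) \<longrightarrow> lt y x)"
    proof (rule back_witness[OF R x a0y0 r_def[symmetric] r _ _ _ ay])
      show "r \<le> d x y" if "(a, y) \<in> R" for a y using min[OF that] by (simp add: r_def)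
      show "a r < v" if "(a, y) \<in> R" "d x y = r" "lt y x" for a y
        using below that by (auto simp: L_def)
      show "v < a r" if "(a, y) \<in> R" "d x y = r" "lt x y" for a y
        using above that by (auto simp: U_def)
    qed
  qed
  then show ?thesis by blast
qed

theorem FS_isomorphic:
  obtains \<Phi> where "bij_betw \<Phi> FS X"
    "\<And>a b. a \<in> FS \<Longrightarrow> b \<in> FS \<Longrightarrow> d (\<Phi> a) (\<Phi> b) = dist_FS a b"
    "\<And>a b. a \<in> FS \<Longrightarrow> b \<in> FS \<Longrightarrow> less_FS a b \<longleftrightarrow> lt (\<Phi> a) (\<Phi> b)"
proof -
  obtain R where dom: "FS \<subseteq> Domain R" and ran: "X \<subseteq> Range R"
    and pairs: "\<And>p q. p \<in> R \<Longrightarrow> q \<in> R \<Longrightarrow> \<exists>R'. partial_iso R' \<and> p \<in> R' \<and> q \<in> R'"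
    using back_and_forth[OF countable_FS countable_X partial_iso_empty forth_extend back_extend] by blast
  have iso: "dist_FS a b = d x y \<and> (less_FS a b \<longrightarrow> lt x y)" if "(a, x) \<in> R" "(b, y) \<in> R" for a b x y
    using pairs[OF that] partial_isoD(3,4) by metis
  have inR: "a \<in> FS \<and> x \<in> X" if "(a, x) \<in> R" for a x
    using pairs[OF that that] partial_isoD(1,2) by metis
  define \<Phi> where "\<Phi> a = (SOME x. (a, x) \<in> R)" for a
  have \<Phi>R: "(a, \<Phi> a) \<in> R" if "a \<in> FS" for a
    using dom that unfolding \<Phi>_def by (meson DomainE someI subsetD)
  have \<Phi>X: "\<Phi> a \<in> X" if "a \<in> FS" for a using inR \<Phi>R that by blast
  have dist: "d (\<Phi> a) (\<Phi> b) = dist_FS a b" if "a \<in> FS" "b \<in> FS" for a b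
    using iso[OF \<Phi>R \<Phi>R] that by simp
  have mono: "less_FS a b \<Longrightarrow> lt (\<Phi> a) (\<Phi> b)" if "a \<in> FS" "b \<in> FS" for a b
    using iso[OF \<Phi>R \<Phi>R] that by simp
  have "inj_on \<Phi> FS"
    using dist dist_FS_eq_0_iff ultrametric_on_eq_0_iff[OF ultrametric_X \<Phi>X \<Phi>X] by (metis inj_onI)
  moreover have "X \<subseteq> \<Phi> ` FS"
  proof
    fix x assume "x \<in> X"
    then obtain a where ax: "(a, x) \<in> R" using ran by blast
    then have a: "a \<in> FS" using inR by blast
    then have "d x (\<Phi> a) = 0" using iso[OF ax \<Phi>R[OF a]] by simp
    then have "x = \<Phi> a" using ultrametric_on_eq_0_iff[OF ultrametric_X \<open>x \<in> X\<close> \<Phi>X[OF a]] by simp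
    then show "x \<in> \<Phi> ` FS" using a by blast
  qed
  ultimately have "bij_betw \<Phi> FS X" using \<Phi>X by (auto simp: bij_betw_def)
  moreover have "less_FS a b" if ab: "a \<in> FS" "b \<in> FS" and lt: "lt (\<Phi> a) (\<Phi> b)" for a b
  proof -
    have "a \<noteq> b" using lt strict_linear_on_irrefl[OF strict_linear_X \<Phi>X[OF ab(1)]] by blast
    moreover have "\<not> less_FS b a"
      using mono[OF ab(2,1)] strict_linear_on_asym[OF strict_linear_X \<Phi>X[OF ab(1)] \<Phi>X[OF ab(2)] lt] by blast
    ultimately show ?thesis using less_FS_total[OF ab] by blast
  qed
  ultimately show ?thesis using that dist mono by blast
qed

end

section \<open>A continuous section for spaces isomorphic to the model\<close>

locale FS_copy =
  fixes X :: "'a set" and d :: "'a \<Rightarrow> 'a \<Rightarrow> rat" and lt :: "'a \<Rightarrow> 'a \<Rightarrow> bool"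
    and \<Phi> :: "(rat \<Rightarrow> rat) \<Rightarrow> 'a"
  assumes bij: "bij_betw \<Phi> FS X"
    and dist: "\<And>a b. a \<in> FS \<Longrightarrow> b \<in> FS \<Longrightarrow> d (\<Phi> a) (\<Phi> b) = dist_FS a b"
    and less: "\<And>a b. a \<in> FS \<Longrightarrow> b \<in> FS \<Longrightarrow> less_FS a b \<longleftrightarrow> lt (\<Phi> a) (\<Phi> b)"
begin

abbreviation \<Psi> :: "'a \<Rightarrow> rat \<Rightarrow> rat" where "\<Psi> \<equiv> inv_into FS \<Phi>"

lemma \<Psi>_in: "x \<in> X \<Longrightarrow> \<Psi> x \<in> FS"
  using bij by (metis bij_betw_def inv_into_into)

lemma \<Phi>_\<Psi>: "x \<in> X \<Longrightarrow> \<Phi> (\<Psi> x) = x"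
  using bij by (metis bij_betw_def f_inv_into_f)

lemma \<Psi>_\<Phi>: "a \<in> FS \<Longrightarrow> \<Psi> (\<Phi> a) = a"
  using bij by (metis bij_betw_def inv_into_f_f)

definition lift :: "(rat \<Rightarrow> rat) \<Rightarrow> ('a \<Rightarrow> 'a) \<times> (rat \<Rightarrow> rat)" where
  "lift h = (restrict (\<lambda>x. \<Phi> (act_FS h (\<Psi> x))) X, h)"

lemma snd_lift [simp]: "snd (lift h) = h"
  by (simp add: lift_def)

lemma lift_AutU:
  assumes h: "h \<in> carrier AutQ"
  shows "lift h \<in> carrier (AutU X d lt)"
proof -
  let ?F = "\<lambda>x. \<Phi> (act_FS h (\<Psi> x))"
  have "bij_betw ?F X X"
    using bij_betw_trans[OF bij_betw_trans[OF bij_betw_inv_into[OF bij] bij_betw_act_FS[OF h]] bij]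
    by (simp add: o_def)
  then have "restrict ?F X \<in> Bij X"
    by (simp add: Bij_def bij_betw_cong[of X "restrict ?F X" ?F])
  moreover have "d (?F x) (?F y) = h (d x y)" if "x \<in> X" "y \<in> X" for x y
    using that dist[OF \<Psi>_in \<Psi>_in, of x y] dist[OF act_FS_closed[OF h \<Psi>_in] act_FS_closed[OF h \<Psi>_in]]
      dist_FS_act[OF h \<Psi>_in \<Psi>_in] by (simp add: \<Phi>_\<Psi>)
  moreover have "lt (?F x) (?F y)" if "x \<in> X" "y \<in> X" "lt x y" for x y
    using that less[OF \<Psi>_in \<Psi>_in, of x y] less[OF act_FS_closed[OF h \<Psi>_in] act_FS_closed[OF h \<Psi>_in]]
      less_FS_act[OF h \<Psi>_in \<Psi>_in] by (simp add: \<Phi>_\<Psi>)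
  ultimately show ?thesis using h by (simp add: AutU_def AutU_carrier_iff lift_def)
qed

lemma lift_hom: "lift \<in> hom AutQ (AutU X d lt)"
proof (rule homI)
  fix g h assume g: "g \<in> carrier AutQ" and h: "h \<in> carrier AutQ"
  have "\<Phi> (act_FS (g \<otimes>\<^bsub>AutQ\<^esub> h) (\<Psi> x)) = \<Phi> (act_FS g (\<Psi> (\<Phi> (act_FS h (\<Psi> x)))))" if "x \<in> X" for x
    using that act_FS_compose[OF g h] \<Psi>_\<Phi>[OF act_FS_closed[OF h \<Psi>_in]] by simp
  moreover have "\<Phi> (act_FS h (\<Psi> x)) \<in> X" if "x \<in> X" for x
    using that bij act_FS_closed[OF h \<Psi>_in] by (auto simp: bij_betw_def)
  ultimately have "restrict (\<lambda>x. \<Phi> (act_FS (g \<otimes>\<^bsub>AutQ\<^esub> h) (\<Psi> x))) X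
      = compose X (restrict (\<lambda>x. \<Phi> (act_FS g (\<Psi> x))) X) (restrict (\<lambda>x. \<Phi> (act_FS h (\<Psi> x))) X)"
    by (auto simp: compose_def intro!: restrict_ext)
  then show "lift (g \<otimes>\<^bsub>AutQ\<^esub> h) = lift g \<otimes>\<^bsub>AutU X d lt\<^esub> lift h"
    by (simp add: lift_def AutU_def AutQ_def)
qed (rule lift_AutU)

lemma continuous_map_lift: "continuous_map AutQ_top (AutU_top X d lt) lift"
proof -
  note top = topspace_AutQ_top
  have "continuous_map AutQ_top (pointwise_topology X) (\<lambda>h. fst (lift h))"
  proof (rule continuous_map_pointwiseI)
    show "fst (lift h) \<in> X \<rightarrow>\<^sub>E X" if "h \<in> topspace AutQ_top" for h
    proof -
      have "fst (lift h) \<in> Bij X"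
        using lift_AutU[of h] that top by (simp add: AutU_def lift_def AutU_carrier_iff)
      then show ?thesis using Bij_in_pointwise_topology by force
    qed
    fix x b assume x: "x \<in> X"
    then have "{h \<in> topspace AutQ_top. fst (lift h) x = b} = {h \<in> topspace AutQ_top. \<Phi> (act_FS h (\<Psi> x)) = b}"
      by (simp add: lift_def)
    then show "openin AutQ_top {h \<in> topspace AutQ_top. fst (lift h) x = b}"
      using openin_act_FS[OF \<Psi>_in[OF x]] by simp
  qed
  from continuous_map_pairedI[OF this continuous_map_AutQ_top_pointwise]
  have "continuous_map AutQ_top (prod_topology (pointwise_topology X) (pointwise_topology Qnn)) lift"
    by (simp add: lift_def[abs_def])
  moreover have "lift ` topspace AutQ_top \<subseteq> AutU_carrier X d lt"
    using lift_AutU top by (auto simp: AutU_def)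
  ultimately show ?thesis by (simp add: AutU_top_def continuous_map_in_subtopology image_subset_iff_funcset)
qed

end

theorem theorem4p5:
  fixes X :: "'a set" and d :: "'a \<Rightarrow> 'a \<Rightarrow> rat" and lt :: "'a \<Rightarrow> 'a \<Rightarrow> bool"
  assumes "fraisse_limit_U X d lt"
  shows "short_exact_top (IsoU X d lt) (IsoU_top X d lt) (AutU X d lt) (AutU_top X d lt)
           AutQ AutQ_top (\<lambda>p. p) snd
       \<and> (\<exists>s. s \<in> hom AutQ (AutU X d lt) \<and> continuous_map AutQ_top (AutU_top X d lt) s \<and>
              (\<forall>h\<in>carrier AutQ. snd (s h) = h) \<and>
              (\<lambda>(n, h). n \<otimes>\<^bsub>AutU X d lt\<^esub> s h)
                 \<in> iso (semidirect (IsoU X d lt) AutQ (AutU X d lt) s) (AutU X d lt) \<and>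
              homeomorphic_map (prod_topology (IsoU_top X d lt) AutQ_top) (AutU_top X d lt)
                 (\<lambda>(n, h). n \<otimes>\<^bsub>AutU X d lt\<^esub> s h))"
proof -
  interpret fraisse_U X d lt by (rule fraisse_U.intro[OF assms])
  obtain \<Phi> where "FS_copy X d lt \<Phi>"
    using FS_isomorphic by (metis FS_copy.intro)
  then interpret FS_copy X d lt \<Phi> .
  have "topological_group (AutU X d lt) (AutU_top X d lt)"
    by (rule topological_group_AutU[OF dist_Qnn strict_linear_X])
  then interpret topological_split_epi "AutU X d lt" AutQ snd lift "AutU_top X d lt" AutQ_top
    using topological_group_AutQ snd_hom_AutU lift_hom continuous_map_snd_AutU continuous_map_lift
    by (intro topological_split_epi.intro split_epi.intro group_hom.intro group_hom_axioms.intro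
        split_epi_axioms.intro topological_split_epi_axioms.intro)
      (simp_all add: topological_group_def)
  show ?thesis
    unfolding IsoU_eq_kernel IsoU_top_eq_kernel
  proof (intro conjI exI[of _ lift] ballI)
    show "short_exact_top (AutU X d lt\<lparr>carrier := K\<rparr>) (subtopology (AutU_top X d lt) K)
        (AutU X d lt) (AutU_top X d lt) AutQ AutQ_top (\<lambda>p. p) snd"
      by (rule short_exact)
    show "homeomorphic_map (prod_topology (subtopology (AutU_top X d lt) K) AutQ_top) (AutU_top X d lt)
        (\<lambda>(n, h). n \<otimes>\<^bsub>AutU X d lt\<^esub> lift h)"
      by (rule homeomorphic_maps_imp_map[OF homeomorphic_maps_decompose])
  qed (simp_all add: lift_hom continuous_map_lift semidirect_iso)
qed

end
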